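(* Every $3$-dimensional superbialgebra $A=A_0\oplus A_1$ over $\mathbb{K}$ with $\dim A_0=2$ is isomorphic to exactly one of the following eleven pairwise non-isomorphic superbialgebras. In all of them $x$ is even, $y$ is odd, $\{1,x,y\}$ is a basis, $\Delta(1)=1\otimes 1$, $\varepsilon(1)=1$, $\varepsilon(y)=0$, and the underlying superalgebras are $A_{2|1}=\mathbb{K}[x,y]/(x^2-x,y^2-x,xy-y)$, $A_{2|2}=\mathbb{K}\langle x,y\rangle/(x^2-x,y^2,xy-y,yx)$, $A_{2|3}=\mathbb{K}[x,y]/(x^2-x,y^2,xy-y)$. On $A_{2|1}$: (1) $\Delta(x)=1\otimes x+x\otimes 1-x\otimes x$, $\Delta(y)=y\otimes 1+1\otimes y-y\otimes x$, $\varepsilon(x)=0$; (2) the co-opposite of (1). On $A_{2|2}$: (3) $\Delta(x)=1\otimes x+x\otimes 1-x\otimes x$, $\Delta(y)=1\otimes y+y\otimes 1-y\otimes x-x\otimes y$, $\varepsilon(x)=0$; (4) $\Delta(x)=1\otimes x+x\otimes 1-x\otimes x+y\otimes y$, $\Delta(y)=1\otimes y+y\otimes 1-y\otimes x-x\otimes y$, $\varepsilon(x)=0$; (5) $\Delta(x)=x\otimes x$, $\Delta(y)=y\otimes x+x\otimes y$, $\varepsilon(x)=1$; (6) $\Delta(x)=x\otimes x+y\otimes y$, $\Delta(y)=y\otimes x+x\otimes y$, $\varepsilon(x)=1$. On $A_{2|3}$: (7) $\Delta(x)=1\otimes x+x\otimes 1-x\otimes x$, $\Delta(y)=1\otimes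 y+y\otimes 1-x\otimes y-y\otimes x$, $\varepsilon(x)=0$; (8) $\Delta(x)=1\otimes x+x\otimes 1-x\otimes x$, $\Delta(y)=1\otimes y+y\otimes 1-x\otimes y$, $\varepsilon(x)=0$; (9) the co-opposite of (8); (10) $\Delta(x)=1\otimes x+x\otimes 1-x\otimes x$, $\Delta(y)=y\otimes 1+1\otimes y$, $\varepsilon(x)=0$; (11) $\Delta(x)=x\otimes x$, $\Delta(y)=y\otimes x+x\otimes y$, $\varepsilon(x)=1$.
   Context: $\mathbb{K}$ is an algebraically closed field of characteristic $0$. A superalgebra is an associative unital $\mathbb{K}$-algebra $A=A_0\oplus A_1$ with a $\mathbb{Z}/2\mathbb{Z}$-grading such that $A_iA_j\subseteq A_{i+j}$ and $1\in A_0$; $|a|$ denotes the degree. $A\otimes A$ has product $(a\otimes b)(c\otimes d)=(-1)^{|b||c|}ac\otimes bd$. A superbialgebra is a superalgebra with even linear maps $\Delta:A\to A\otimes A$, $\varepsilon:A\to\mathbb{K}$ ($\mathbb{K}$ in degree $0$) which are coassociative and counital and are unital algebra homomorphisms. An isomorphism of superbialgebras is an even linear bijection preserving product, unit, coproduct and counit. The co-opposite of a superbialgebra $(A,\Delta,\varepsilon)$ is $(A,\tau\circ\Delta,\varepsilon)$ with the super flip $\tau(a\otimes b)=(-1)^{|a||b|}b\otimes a$. $\mathbb{K}[x,y]/I$ is a quotient of the commutative polynomial ring, $\mathbb{K}\langle x,y\rangle/I$ of the free associative algebra. *)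

theory Defs
  imports "HOL-Computational_Algebra.Polynomial"
begin

text \<open>
  A superbialgebra of dimension 3 with even part of dimension 2 is encoded by its
  structure constants with respect to a homogeneous basis e0, e1, e2, where e0, e1
  span the even part and e2 spans the odd part.  Indices range over 0, 1, 2.
  mu i j k: coefficient of e_k in e_i e_j;  un k: coefficient of e_k in the unit;
  co k i j: coefficient of e_i (x) e_j in Delta(e_k);  cu k: counit of e_k.
\<close>

record 'a sbd =
  mu :: "nat \<Rightarrow> nat \<Rightarrow> nat \<Rightarrow> 'a"
  un :: "nat \<Rightarrow> 'a"
  co :: "nat \<Rightarrow> nat \<Rightarrow> nat \<Rightarrow> 'a"
  cu :: "nat \<Rightarrow> 'a"

definition par :: "nat \<Rightarrow> nat" where
  "par i = (if i = 2 then 1 else 0)"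

definition ksign :: "nat \<Rightarrow> nat \<Rightarrow> 'a::ring_1" where
  "ksign i j = (if par i = 1 \<and> par j = 1 then -1 else 1)"

definition kd :: "nat \<Rightarrow> nat \<Rightarrow> 'a::ring_1" where
  "kd i j = (if i = j then 1 else 0)"

definition superbialg3 :: "'a::field sbd \<Rightarrow> bool" where
  "superbialg3 A \<longleftrightarrow>
    \<comment> \<open>grading: product, unit, coproduct and counit are even\<close>
    (\<forall>i<3. \<forall>j<3. \<forall>k<3. mu A i j k \<noteq> 0 \<longrightarrow> par k = (par i + par j) mod 2) \<and>
    un A 2 = 0 \<and>
    (\<forall>k<3. \<forall>i<3. \<forall>j<3. co A k i j \<noteq> 0 \<longrightarrow> (par i + par j) mod 2 = par k) \<and>
    cu A 2 = 0 \<and>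
    \<comment> \<open>associativity\<close>
    (\<forall>i<3. \<forall>j<3. \<forall>l<3. \<forall>n<3.
       (\<Sum>k<3. mu A i j k * mu A k l n) = (\<Sum>k<3. mu A j l k * mu A i k n)) \<and>
    \<comment> \<open>unit\<close>
    (\<forall>i<3. \<forall>k<3. (\<Sum>j<3. un A j * mu A j i k) = kd i k \<and>
                   (\<Sum>j<3. un A j * mu A i j k) = kd i k) \<and>
    \<comment> \<open>coassociativity\<close>
    (\<forall>k<3. \<forall>a<3. \<forall>b<3. \<forall>c<3.
       (\<Sum>i<3. co A k i c * co A i a b) = (\<Sum>j<3. co A k a j * co A j b c)) \<and>
    \<comment> \<open>counit\<close>
    (\<forall>k<3. \<forall>j<3. (\<Sum>i<3. cu A i * co A k i j) = kd k j) \<and>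
    (\<forall>k<3. \<forall>i<3. (\<Sum>j<3. co A k i j * cu A j) = kd k i) \<and>
    \<comment> \<open>Delta and epsilon are unital\<close>
    (\<forall>i<3. \<forall>j<3. (\<Sum>k<3. un A k * co A k i j) = un A i * un A j) \<and>
    (\<Sum>k<3. un A k * cu A k) = 1 \<and>
    \<comment> \<open>epsilon multiplicative\<close>
    (\<forall>i<3. \<forall>j<3. (\<Sum>k<3. mu A i j k * cu A k) = cu A i * cu A j) \<and>
    \<comment> \<open>Delta multiplicative for the super tensor product algebra\<close>
    (\<forall>a<3. \<forall>b<3. \<forall>p<3. \<forall>q<3.
       (\<Sum>k<3. mu A a b k * co A k p q) =
       (\<Sum>i<3. \<Sum>j<3. \<Sum>l<3. \<Sum>m<3.
          co A a i j * co A b l m * ksign j l * mu A i l p * mu A j m q))"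

definition sb_iso :: "'a::field sbd \<Rightarrow> 'a sbd \<Rightarrow> bool" where
  "sb_iso A B \<longleftrightarrow> (\<exists>P :: nat \<Rightarrow> nat \<Rightarrow> 'a.
    (\<forall>i<3. \<forall>j<3. P i j \<noteq> 0 \<longrightarrow> par i = par j) \<and>
    (\<exists>Q :: nat \<Rightarrow> nat \<Rightarrow> 'a. \<forall>i<3. \<forall>k<3.
        (\<Sum>j<3. P i j * Q j k) = kd i k \<and> (\<Sum>j<3. Q i j * P j k) = kd i k) \<and>
    (\<forall>a<3. \<forall>b<3. \<forall>c<3.
       (\<Sum>k<3. mu A a b k * P k c) = (\<Sum>i<3. \<Sum>j<3. P a i * P b j * mu B i j c)) \<and>
    (\<forall>c<3. (\<Sum>k<3. un A k * P k c) = un B c) \<and>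
    (\<forall>a<3. \<forall>p<3. \<forall>q<3.
       (\<Sum>i<3. \<Sum>j<3. co A a i j * P i p * P j q) = (\<Sum>k<3. P a k * co B k p q)) \<and>
    (\<forall>a<3. (\<Sum>k<3. P a k * cu B k) = cu A a))"

definition coop :: "'a::field sbd \<Rightarrow> 'a sbd" where
  "coop A = A\<lparr>co := (\<lambda>k p q. ksign q p * co A k q p)\<rparr>"

text \<open>The eleven models; basis e0 = 1, e1 = x (even), e2 = y (odd).\<close>

definition bv :: "nat \<Rightarrow> nat \<Rightarrow> 'a::ring_1" where
  "bv k n = (if n = k then 1 else 0)"

definition tb :: "nat \<Rightarrow> nat \<Rightarrow> nat \<Rightarrow> nat \<Rightarrow> 'a::ring_1" where
  "tb i j p q = (if p = i \<and> q = j then 1 else 0)"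

text \<open>A_{2|1} = K[x,y]/(x^2-x, y^2-x, xy-y)\<close>
definition mul21 :: "nat \<Rightarrow> nat \<Rightarrow> nat \<Rightarrow> 'a::ring_1" where
  "mul21 i j = (if i = 0 then bv j else if j = 0 then bv i
     else if i = 1 \<and> j = 1 then bv 1 else if i = 1 \<and> j = 2 then bv 2
     else if i = 2 \<and> j = 1 then bv 2 else bv 1)"

text \<open>A_{2|2} = K<x,y>/(x^2-x, y^2, xy-y, yx)\<close>
definition mul22 :: "nat \<Rightarrow> nat \<Rightarrow> nat \<Rightarrow> 'a::ring_1" where
  "mul22 i j = (if i = 0 then bv j else if j = 0 then bv i
     else if i = 1 \<and> j = 1 then bv 1 else if i = 1 \<and> j = 2 then bv 2
     else (\<lambda>_. 0))"

text \<open>A_{2|3} = K[x,y]/(x^2-x, y^2, xy-y)\<close>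
definition mul23 :: "nat \<Rightarrow> nat \<Rightarrow> nat \<Rightarrow> 'a::ring_1" where
  "mul23 i j = (if i = 0 then bv j else if j = 0 then bv i
     else if i = 1 \<and> j = 1 then bv 1 else if i = 1 \<and> j = 2 then bv 2
     else if i = 2 \<and> j = 1 then bv 2 else (\<lambda>_. 0))"

definition mk :: "(nat \<Rightarrow> nat \<Rightarrow> nat \<Rightarrow> 'a::ring_1) \<Rightarrow> (nat \<Rightarrow> nat \<Rightarrow> 'a)
    \<Rightarrow> (nat \<Rightarrow> nat \<Rightarrow> 'a) \<Rightarrow> 'a \<Rightarrow> 'a sbd" where
  "mk m dx dy ex = \<lparr>mu = m, un = bv 0,
     co = (\<lambda>k. if k = 0 then tb 0 0 else if k = 1 then dx else dy),
     cu = (\<lambda>k. if k = 0 then 1 else if k = 1 then ex else 0)\<rparr>"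

definition dx0 :: "nat \<Rightarrow> nat \<Rightarrow> 'a::ring_1" where
  "dx0 p q = tb 0 1 p q + tb 1 0 p q - tb 1 1 p q"

definition model :: "nat \<Rightarrow> 'a::field sbd" where
  "model n =
    (if n = 1 then mk mul21 dx0 (\<lambda>p q. tb 2 0 p q + tb 0 2 p q - tb 2 1 p q) 0
     else if n = 2 then coop (mk mul21 dx0 (\<lambda>p q. tb 2 0 p q + tb 0 2 p q - tb 2 1 p q) 0)
     else if n = 3 then mk mul22 dx0
        (\<lambda>p q. tb 0 2 p q + tb 2 0 p q - tb 2 1 p q - tb 1 2 p q) 0
     else if n = 4 then mk mul22 (\<lambda>p q. dx0 p q + tb 2 2 p q)
        (\<lambda>p q. tb 0 2 p q + tb 2 0 p q - tb 2 1 p q - tb 1 2 p q) 0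
     else if n = 5 then mk mul22 (tb 1 1) (\<lambda>p q. tb 2 1 p q + tb 1 2 p q) 1
     else if n = 6 then mk mul22 (\<lambda>p q. tb 1 1 p q + tb 2 2 p q)
        (\<lambda>p q. tb 2 1 p q + tb 1 2 p q) 1
     else if n = 7 then mk mul23 dx0
        (\<lambda>p q. tb 0 2 p q + tb 2 0 p q - tb 1 2 p q - tb 2 1 p q) 0
     else if n = 8 then mk mul23 dx0 (\<lambda>p q. tb 0 2 p q + tb 2 0 p q - tb 1 2 p q) 0
     else if n = 9 then coop (mk mul23 dx0 (\<lambda>p q. tb 0 2 p q + tb 2 0 p q - tb 1 2 p q) 0)
     else if n = 10 then mk mul23 dx0 (\<lambda>p q. tb 2 0 p q + tb 0 2 p q) 0
     else mk mul23 (tb 1 1) (\<lambda>p q. tb 2 1 p q + tb 1 2 p q) 1)"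

end

theory Submission
  imports Defs
begin

text \<open>
  Even changes of basis bring every such superbialgebra into a normal form. First the unit becomes
  \<open>e\<^sub>0\<close>; completing the square in \<open>x\<^sup>2 = \<alpha> + \<beta> x\<close> gives \<open>x\<^sup>2 = x\<close>, because
  \<open>x\<^sup>2 = 0\<close> would force \<open>2 = 0\<close>; associativity then leaves only \<open>A_{2|1}\<close>, \<open>A_{2|2}\<close> and
  \<open>A_{2|3}\<close>. Over each of them \<open>\<epsilon>(x) \<in> {0, 1}\<close>, and comparing coefficients in coassociativity
  and in the multiplicativity of \<open>\<Delta>\<close> determines \<open>\<Delta>(x)\<close> and \<open>\<Delta>(y)\<close>, up to a rescaling of
  \<open>y\<close>, as one of the eleven models. Distinct models are told apart by which of six structure
  constants vanish, since an isomorphism between normal forms fixes \<open>1\<close> and \<open>x\<close> and only rescales \<open>y\<close>.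
\<close>

section \<open>Structure constants and their transport along even changes of basis\<close>

lemma lessThan_3: "{..<(3::nat)} = {0, 1, 2}"
  by auto

lemma sum_3: "(\<Sum>i<(3::nat). f i) = f 0 + f 1 + f 2"
  by (simp add: lessThan_3 add.assoc)

lemma all_less_3: "(\<forall>i<(3::nat). P i) \<longleftrightarrow> P 0 \<and> P 1 \<and> P 2"
  by (auto simp: lessThan_3 simp flip: lessThan_iff)

lemma less_3_cases: "i < (3::nat) \<Longrightarrow> i = 0 \<or> i = 1 \<or> i = 2"
  by arith

lemma par_simps [simp]: "par 0 = 0" "par 1 = 0" "par 2 = 1" "par (Suc 0) = 0"
  by (simp_all add: par_def)

lemma sum_kd_left: "i < 3 \<Longrightarrow> (\<Sum>j<3. kd i j * f j) = (f i :: 'a::ring_1)"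
  using less_3_cases[of i] by (auto simp: sum_3 kd_def)

lemma sum_kd_right: "i < 3 \<Longrightarrow> (\<Sum>j<3. f j * kd j i) = (f i :: 'a::ring_1)"
  using less_3_cases[of i] by (auto simp: sum_3 kd_def)

lemma sum_sum_kd_left:
  "i < 3 \<Longrightarrow> j < 3 \<Longrightarrow> (\<Sum>i'<3. \<Sum>j'<3. kd i i' * kd j j' * X i' j') = (X i j :: 'a::ring_1)"
  using less_3_cases[of i] less_3_cases[of j] by (auto simp: sum_3 kd_def)

lemma sum_sum_kd_right:
  "i < 3 \<Longrightarrow> j < 3 \<Longrightarrow> (\<Sum>i'<3. \<Sum>j'<3. kd i' i * kd j' j * X i' j') = (X i j :: 'a::ring_1)"
  using less_3_cases[of i] less_3_cases[of j] by (auto simp: sum_3 kd_def)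

lemma superbialg3D:
  assumes "superbialg3 A"
  shows mu_grading [rule_format]:
      "\<forall>i<3. \<forall>j<3. \<forall>k<3. mu A i j k \<noteq> 0 \<longrightarrow> par k = (par i + par j) mod 2"
    and un_odd: "un A 2 = 0"
    and co_grading [rule_format]:
      "\<forall>k<3. \<forall>i<3. \<forall>j<3. co A k i j \<noteq> 0 \<longrightarrow> (par i + par j) mod 2 = par k"
    and cu_odd: "cu A 2 = 0"
    and mu_assoc [rule_format]: "\<forall>i<3. \<forall>j<3. \<forall>l<3. \<forall>n<3.
      (\<Sum>k<3. mu A i j k * mu A k l n) = (\<Sum>k<3. mu A j l k * mu A i k n)"
    and mu_unit [rule_format]: "\<forall>i<3. \<forall>k<3.
      (\<Sum>j<3. un A j * mu A j i k) = kd i k \<and> (\<Sum>j<3. un A j * mu A i j k) = kd i k"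
    and co_assoc [rule_format]: "\<forall>k<3. \<forall>a<3. \<forall>b<3. \<forall>c<3.
      (\<Sum>i<3. co A k i c * co A i a b) = (\<Sum>j<3. co A k a j * co A j b c)"
    and co_counit_left [rule_format]: "\<forall>k<3. \<forall>j<3. (\<Sum>i<3. cu A i * co A k i j) = kd k j"
    and co_counit_right [rule_format]: "\<forall>k<3. \<forall>i<3. (\<Sum>j<3. co A k i j * cu A j) = kd k i"
    and co_unit [rule_format]: "\<forall>i<3. \<forall>j<3. (\<Sum>k<3. un A k * co A k i j) = un A i * un A j"
    and cu_unit: "(\<Sum>k<3. un A k * cu A k) = 1"
    and cu_mult [rule_format]: "\<forall>i<3. \<forall>j<3. (\<Sum>k<3. mu A i j k * cu A k) = cu A i * cu A j"
    and co_mult [rule_format]: "\<forall>a<3. \<forall>b<3. \<forall>p<3. \<forall>q<3.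
      (\<Sum>k<3. mu A a b k * co A k p q) =
      (\<Sum>i<3. \<Sum>j<3. \<Sum>l<3. \<Sum>m<3. co A a i j * co A b l m * ksign j l * mu A i l p * mu A j m q)"
  by (insert assms, unfold superbialg3_def, (elim conjE, assumption)+)

lemmas mu_unit_left = mu_unit[THEN conjunct1] and mu_unit_right = mu_unit[THEN conjunct2]

definition parity_preserving :: "(nat \<Rightarrow> nat \<Rightarrow> 'a::zero) \<Rightarrow> bool" where
  "parity_preserving P \<longleftrightarrow> (\<forall>i<3. \<forall>j<3. P i j \<noteq> 0 \<longrightarrow> par i = par j)"

definition inverse_mat3 :: "(nat \<Rightarrow> nat \<Rightarrow> 'a::ring_1) \<Rightarrow> (nat \<Rightarrow> nat \<Rightarrow> 'a) \<Rightarrow> bool" where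
  "inverse_mat3 P Q \<longleftrightarrow>
    (\<forall>i<3. \<forall>k<3. (\<Sum>j<3. P i j * Q j k) = kd i k \<and> (\<Sum>j<3. Q i j * P j k) = kd i k)"

definition sb_hom :: "'a::field sbd \<Rightarrow> 'a sbd \<Rightarrow> (nat \<Rightarrow> nat \<Rightarrow> 'a) \<Rightarrow> bool" where
  "sb_hom A B P \<longleftrightarrow>
    (\<forall>a<3. \<forall>b<3. \<forall>c<3.
       (\<Sum>k<3. mu A a b k * P k c) = (\<Sum>i<3. \<Sum>j<3. P a i * P b j * mu B i j c)) \<and>
    (\<forall>c<3. (\<Sum>k<3. un A k * P k c) = un B c) \<and>
    (\<forall>a<3. \<forall>p<3. \<forall>q<3.
       (\<Sum>i<3. \<Sum>j<3. co A a i j * P i p * P j q) = (\<Sum>k<3. P a k * co B k p q)) \<and>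
    (\<forall>a<3. (\<Sum>k<3. P a k * cu B k) = cu A a)"

lemma sb_iso_iff:
  "sb_iso A B \<longleftrightarrow> (\<exists>P. parity_preserving P \<and> (\<exists>Q. inverse_mat3 P Q) \<and> sb_hom A B P)"
  unfolding sb_iso_def parity_preserving_def inverse_mat3_def sb_hom_def by blast

lemma parity_preserving_iff:
  "parity_preserving P \<longleftrightarrow> P 0 2 = 0 \<and> P 1 2 = 0 \<and> P 2 0 = 0 \<and> P 2 1 = 0"
  unfolding parity_preserving_def all_less_3 by auto

lemma inverse_mat3_sym: "inverse_mat3 P Q \<Longrightarrow> inverse_mat3 Q P"
  unfolding inverse_mat3_def by blast

lemma inverse_mat3_cancel1:
  assumes inv: "inverse_mat3 P Q"
    and eq: "\<forall>a<3. (\<Sum>k<3. P a k * X k) = (\<Sum>k<3. P a k * Y k)" and k: "k < 3"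
  shows "X k = (Y k :: 'a::comm_ring_1)"
proof -
  have QP: "\<And>i k. i < 3 \<Longrightarrow> k < 3 \<Longrightarrow> (\<Sum>j<3. Q i j * P j k) = kd i k"
    using inv unfolding inverse_mat3_def by blast
  have recover: "(\<Sum>a<3. Q k a * (\<Sum>j<3. P a j * Z j)) = Z k" for Z
  proof -
    have "(\<Sum>a<3. Q k a * (\<Sum>j<3. P a j * Z j)) = (\<Sum>j<3. (\<Sum>a<3. Q k a * P a j) * Z j)"
      by (simp add: sum_3 algebra_simps)
    also have "\<dots> = Z k"
      using k by (simp add: QP sum_kd_left)
    finally show ?thesis .
  qed
  have "X k = (\<Sum>a<3. Q k a * (\<Sum>j<3. P a j * X j))" by (rule recover[symmetric])
  also have "\<dots> = (\<Sum>a<3. Q k a * (\<Sum>j<3. P a j * Y j))" using eq by simp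
  also have "\<dots> = Y k" by (rule recover)
  finally show ?thesis .
qed

lemma inverse_mat3_cancel2:
  assumes inv: "inverse_mat3 P Q"
    and eq: "\<forall>a<3. \<forall>b<3. (\<Sum>i<3. \<Sum>j<3. P a i * P b j * X i j) = (\<Sum>i<3. \<Sum>j<3. P a i * P b j * Y i j)"
    and ij: "i < 3" "j < 3"
  shows "X i j = (Y i j :: 'a::comm_ring_1)"
proof -
  have nest: "\<And>a b Z. (\<Sum>i<3. \<Sum>j<3. P a i * P b j * Z i j) = (\<Sum>i<3. P a i * (\<Sum>j<3. P b j * Z i j))"
    by (simp add: sum_distrib_left mult.assoc)
  have "(\<Sum>j<3. P b j * X i j) = (\<Sum>j<3. P b j * Y i j)" if "b < 3" for b
    using inverse_mat3_cancel1[OF inv, of "\<lambda>k. \<Sum>j<3. P b j * X k j" "\<lambda>k. \<Sum>j<3. P b j * Y k j" i]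
      eq that ij by (simp add: nest)
  then show ?thesis using inverse_mat3_cancel1[OF inv, of "X i" "Y i" j] ij by simp
qed

lemma inverse_mat3_cancel3:
  assumes inv: "inverse_mat3 P Q"
    and eq: "\<forall>a<3. \<forall>b<3. \<forall>d<3. (\<Sum>i<3. \<Sum>j<3. \<Sum>l<3. P a i * P b j * P d l * X i j l) =
               (\<Sum>i<3. \<Sum>j<3. \<Sum>l<3. P a i * P b j * P d l * Y i j l)"
    and ijl: "i < 3" "j < 3" "l < 3"
  shows "X i j l = (Y i j l :: 'a::comm_ring_1)"
proof -
  have nest: "\<And>a b d Z. (\<Sum>i<3. \<Sum>j<3. \<Sum>l<3. P a i * P b j * P d l * Z i j l) =
      (\<Sum>i<3. \<Sum>j<3. P a i * P b j * (\<Sum>l<3. P d l * Z i j l))"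
    by (simp add: sum_distrib_left mult.assoc)
  have "(\<Sum>l<3. P d l * X i j l) = (\<Sum>l<3. P d l * Y i j l)" if "d < 3" for d
    using inverse_mat3_cancel2[OF inv, of "\<lambda>i j. \<Sum>l<3. P d l * X i j l" "\<lambda>i j. \<Sum>l<3. P d l * Y i j l" i j]
      eq that ijl by (simp add: nest)
  then show ?thesis using inverse_mat3_cancel1[OF inv, of "X i j" "Y i j" l] ijl by simp
qed

declare One_nat_def [simp del]

lemma sb_homD:
  assumes "sb_hom A B P"
  shows sb_hom_mu: "\<And>a b c. a < 3 \<Longrightarrow> b < 3 \<Longrightarrow> c < 3 \<Longrightarrow>
      (\<Sum>i<3. \<Sum>j<3. P a i * P b j * mu B i j c) = (\<Sum>k<3. mu A a b k * P k c)"
    and sb_hom_un: "\<And>c. c < 3 \<Longrightarrow> (\<Sum>k<3. un A k * P k c) = un B c"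
    and sb_hom_co: "\<And>a p q. a < 3 \<Longrightarrow> p < 3 \<Longrightarrow> q < 3 \<Longrightarrow>
      (\<Sum>k<3. P a k * co B k p q) = (\<Sum>i<3. \<Sum>j<3. co A a i j * P i p * P j q)"
    and sb_hom_cu: "\<And>a. a < 3 \<Longrightarrow> (\<Sum>k<3. P a k * cu B k) = cu A a"
  using assms unfolding sb_hom_def by simp_all

locale sb_iso_witness =
  fixes A B :: "'a::field sbd" and P Q :: "nat \<Rightarrow> nat \<Rightarrow> 'a"
  assumes parity: "parity_preserving P" and inverse: "inverse_mat3 P Q" and hom: "sb_hom A B P"
begin

lemmas mu_hom = sb_hom_mu[OF hom] and un_hom = sb_hom_un[OF hom]
  and co_hom = sb_hom_co[OF hom] and cu_hom = sb_hom_cu[OF hom]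

lemma P_Q: "i < 3 \<Longrightarrow> k < 3 \<Longrightarrow> (\<Sum>j<3. P i j * Q j k) = kd i k"
  using inverse unfolding inverse_mat3_def by simp

lemma Q_P: "i < 3 \<Longrightarrow> k < 3 \<Longrightarrow> (\<Sum>j<3. Q i j * P j k) = kd i k"
  using inverse unfolding inverse_mat3_def by simp

lemma P_mixed_parity: "P 0 2 = 0" "P 1 2 = 0" "P 2 0 = 0" "P 2 1 = 0"
  using parity unfolding parity_preserving_iff by auto

lemma P_odd_invertible: "Q 2 2 * P 2 2 = 1"
  using Q_P[of 2 2] by (simp add: sum_3 P_mixed_parity kd_def)

lemma Q_mixed_parity: "Q 0 2 = 0" "Q 1 2 = 0" "Q 2 0 = 0" "Q 2 1 = 0"
proof -
  have "P 2 2 \<noteq> 0" using P_odd_invertible by auto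
  moreover have "P 2 2 * Q 2 0 = 0" "P 2 2 * Q 2 1 = 0"
    using P_Q[of 2 0] P_Q[of 2 1] by (simp_all add: sum_3 P_mixed_parity kd_def)
  moreover have "Q 0 2 * P 2 2 = 0" "Q 1 2 * P 2 2 = 0"
    using Q_P[of 0 2] Q_P[of 1 2] by (simp_all add: sum_3 P_mixed_parity kd_def)
  ultimately show "Q 0 2 = 0" "Q 1 2 = 0" "Q 2 0 = 0" "Q 2 1 = 0" by auto
qed

lemma parity_Q: "parity_preserving Q"
  unfolding parity_preserving_iff by (simp add: Q_mixed_parity)

lemma mu_B_eq: assumes "i < 3" "j < 3" "c < 3"
  shows "mu B i j c = (\<Sum>a<3. \<Sum>b<3. Q i a * Q j b * (\<Sum>k<3. mu A a b k * P k c))"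
proof -
  have "(\<Sum>a<3. \<Sum>b<3. Q i a * Q j b * (\<Sum>k<3. mu A a b k * P k c)) =
      (\<Sum>a<3. \<Sum>b<3. Q i a * Q j b * (\<Sum>i'<3. \<Sum>j'<3. P a i' * P b j' * mu B i' j' c))"
    using assms by (simp add: mu_hom)
  also have "\<dots> = (\<Sum>i'<3. \<Sum>j'<3. (\<Sum>a<3. Q i a * P a i') * (\<Sum>b<3. Q j b * P b j') * mu B i' j' c)"
    by (simp add: sum_3 algebra_simps)
  also have "\<dots> = mu B i j c"
    using assms by (simp add: Q_P sum_sum_kd_left)
  finally show ?thesis by simp
qed

lemma co_B_eq: assumes "k < 3" "p < 3" "q < 3"
  shows "co B k p q = (\<Sum>a<3. Q k a * (\<Sum>i<3. \<Sum>j<3. co A a i j * P i p * P j q))"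
proof -
  have "(\<Sum>a<3. Q k a * (\<Sum>i<3. \<Sum>j<3. co A a i j * P i p * P j q)) =
      (\<Sum>a<3. Q k a * (\<Sum>k'<3. P a k' * co B k' p q))"
    using assms by (simp add: co_hom)
  also have "\<dots> = (\<Sum>k'<3. (\<Sum>a<3. Q k a * P a k') * co B k' p q)"
    by (simp add: sum_3 algebra_simps)
  also have "\<dots> = co B k p q"
    using assms by (simp add: Q_P sum_kd_left)
  finally show ?thesis by simp
qed

lemma cu_B_eq: assumes "k < 3" shows "cu B k = (\<Sum>a<3. Q k a * cu A a)"
proof -
  have "(\<Sum>a<3. Q k a * cu A a) = (\<Sum>a<3. Q k a * (\<Sum>k'<3. P a k' * cu B k'))"
    by (simp add: cu_hom)
  also have "\<dots> = (\<Sum>k'<3. (\<Sum>a<3. Q k a * P a k') * cu B k')"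
    by (simp add: sum_3 algebra_simps)
  also have "\<dots> = cu B k"
    using assms by (simp add: Q_P sum_kd_left)
  finally show ?thesis by simp
qed

lemma sb_hom_inverse: "sb_hom B A Q"
  unfolding sb_hom_def
proof (intro conjI allI impI)
  fix a b c :: nat assume h: "a < 3" "b < 3" "c < 3"
  have "(\<Sum>k<3. mu B a b k * Q k c) =
      (\<Sum>a'<3. \<Sum>b'<3. Q a a' * Q b b' * (\<Sum>k'<3. mu A a' b' k' * (\<Sum>k<3. P k' k * Q k c)))"
    using h by (simp add: mu_B_eq sum_3 algebra_simps)
  also have "\<dots> = (\<Sum>i<3. \<Sum>j<3. Q a i * Q b j * mu A i j c)"
    using h by (simp add: P_Q sum_kd_right)
  finally show "(\<Sum>k<3. mu B a b k * Q k c) = (\<Sum>i<3. \<Sum>j<3. Q a i * Q b j * mu A i j c)" .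
next
  fix c :: nat assume h: "c < 3"
  have "(\<Sum>k<3. un B k * Q k c) = (\<Sum>k<3. (\<Sum>j<3. un A j * P j k) * Q k c)"
    by (simp add: un_hom)
  also have "\<dots> = (\<Sum>j<3. un A j * (\<Sum>k<3. P j k * Q k c))"
    by (simp add: sum_3 algebra_simps)
  also have "\<dots> = un A c"
    using h by (simp add: P_Q sum_kd_right)
  finally show "(\<Sum>k<3. un B k * Q k c) = un A c" .
next
  fix a p q :: nat assume h: "a < 3" "p < 3" "q < 3"
  have "(\<Sum>i<3. \<Sum>j<3. co B a i j * Q i p * Q j q) =
      (\<Sum>a'<3. Q a a' * (\<Sum>i'<3. \<Sum>j'<3. co A a' i' j' * (\<Sum>i<3. P i' i * Q i p) * (\<Sum>j<3. P j' j * Q j q)))"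
    using h by (simp add: co_B_eq sum_3 algebra_simps)
  also have "\<dots> = (\<Sum>a'<3. Q a a' * (\<Sum>i'<3. \<Sum>j'<3. kd i' p * kd j' q * co A a' i' j'))"
    using h by (simp add: P_Q mult_ac)
  also have "\<dots> = (\<Sum>k<3. Q a k * co A k p q)"
    using h by (simp add: sum_sum_kd_right)
  finally show "(\<Sum>i<3. \<Sum>j<3. co B a i j * Q i p * Q j q) = (\<Sum>k<3. Q a k * co A k p q)" .
next
  fix a :: nat assume "a < 3"
  then show "(\<Sum>k<3. Q a k * cu A k) = cu B a" by (simp add: cu_B_eq)
qed

end


lemma mu_parity_zero:
  "superbialg3 A \<Longrightarrow> i < 3 \<Longrightarrow> j < 3 \<Longrightarrow> k < 3 \<Longrightarrow> par k \<noteq> (par i + par j) mod 2 \<Longrightarrow> mu A i j k = 0"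
  using mu_grading by blast

lemma co_parity_zero:
  "superbialg3 A \<Longrightarrow> k < 3 \<Longrightarrow> i < 3 \<Longrightarrow> j < 3 \<Longrightarrow> (par i + par j) mod 2 \<noteq> par k \<Longrightarrow> co A k i j = 0"
  using co_grading by blast

lemma sum_mult_sum_swap:
  "(\<Sum>b\<in>B. g b * (\<Sum>i\<in>I. T b i)) = (\<Sum>i\<in>I. \<Sum>b\<in>B. g b * T b i)"
  for g :: "'x \<Rightarrow> 'a::comm_semiring_0"
  by (simp add: sum_distrib_left) (rule sum.swap)

lemma sum_sum4_swap:
  "(\<Sum>b\<in>B. \<Sum>i\<in>I. \<Sum>j\<in>J. \<Sum>l\<in>L. \<Sum>m\<in>M. T b i j l m) =
   (\<Sum>i\<in>I. \<Sum>j\<in>J. \<Sum>l\<in>L. \<Sum>m\<in>M. \<Sum>b\<in>B. T b i j l m)"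
  for T :: "_ \<Rightarrow> _ \<Rightarrow> _ \<Rightarrow> _ \<Rightarrow> _ \<Rightarrow> 'a::comm_semiring_1"
proof -
  have "(\<Sum>b\<in>B. (1::'a) * (\<Sum>i\<in>I. \<Sum>j\<in>J. \<Sum>l\<in>L. \<Sum>m\<in>M. T b i j l m)) =
      (\<Sum>i\<in>I. \<Sum>j\<in>J. \<Sum>l\<in>L. \<Sum>m\<in>M. \<Sum>b\<in>B. 1 * T b i j l m)"
    by (simp only: sum_mult_sum_swap)
  then show ?thesis by (simp only: mult_1_left)
qed

lemma sum_pair_sum4_regroup:
  fixes f g :: "nat \<Rightarrow> 'a::comm_ring_1" and X Y :: "nat \<Rightarrow> nat \<Rightarrow> nat \<Rightarrow> 'a" and K U V :: "nat \<Rightarrow> nat \<Rightarrow> 'a"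
  shows "(\<Sum>a<3. \<Sum>b<3. f a * g b *
      (\<Sum>i<3. \<Sum>j<3. \<Sum>l<3. \<Sum>m<3. X a i j * Y b l m * K j l * U i l * V j m)) =
    (\<Sum>i<3. \<Sum>j<3. \<Sum>l<3. \<Sum>m<3.
      (\<Sum>a<3. f a * X a i j) * (\<Sum>b<3. g b * Y b l m) * K j l * U i l * V j m)"
proof -
  have "(\<Sum>a<3. \<Sum>b<3. f a * g b *
      (\<Sum>i<3. \<Sum>j<3. \<Sum>l<3. \<Sum>m<3. X a i j * Y b l m * K j l * U i l * V j m)) =
    (\<Sum>a<3. f a * (\<Sum>b<3. g b *
      (\<Sum>i<3. \<Sum>j<3. \<Sum>l<3. \<Sum>m<3. X a i j * Y b l m * K j l * U i l * V j m)))"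
    by (simp add: sum_distrib_left mult.assoc)
  also have "\<dots> = (\<Sum>i<3. \<Sum>j<3. \<Sum>l<3. \<Sum>m<3. \<Sum>a<3. f a *
      (\<Sum>b<3. g b * (X a i j * Y b l m * K j l * U i l * V j m)))"
    by (simp only: sum_mult_sum_swap)
  also have "\<dots> = (\<Sum>i<3. \<Sum>j<3. \<Sum>l<3. \<Sum>m<3.
      (\<Sum>a<3. f a * X a i j) * (\<Sum>b<3. g b * Y b l m) * K j l * U i l * V j m)"
    by (intro sum.cong refl) (simp add: sum_3 algebra_simps)
  finally show ?thesis .
qed

lemma sum2_pullback:
  fixes G R Z :: "nat \<Rightarrow> nat \<Rightarrow> 'a::comm_ring_1"
  shows "(\<Sum>l<3. \<Sum>m<3. (\<Sum>l'<3. \<Sum>m'<3. G l' m' * R l' l * R m' m) * Z l m) =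
    (\<Sum>l'<3. \<Sum>m'<3. G l' m' * (\<Sum>l<3. \<Sum>m<3. R l' l * R m' m * Z l m))"
  by (simp add: sum_3 algebra_simps)

lemma sum2_mult_sum2_swap:
  fixes c G :: "nat \<Rightarrow> nat \<Rightarrow> 'a::comm_ring_1" and W :: "nat \<Rightarrow> nat \<Rightarrow> nat \<Rightarrow> nat \<Rightarrow> 'a"
  shows "(\<Sum>i<3. \<Sum>j<3. c i j * (\<Sum>l<3. \<Sum>m<3. G l m * W i j l m)) =
    (\<Sum>l<3. \<Sum>m<3. G l m * (\<Sum>i<3. \<Sum>j<3. c i j * W i j l m))"
  by (simp add: sum_3 algebra_simps)

lemma sum4_pullback_regroup:
  fixes F G R :: "nat \<Rightarrow> nat \<Rightarrow> 'a::comm_ring_1" and K U V :: "nat \<Rightarrow> nat \<Rightarrow> 'a"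
  shows "(\<Sum>i<3. \<Sum>j<3. \<Sum>l<3. \<Sum>m<3.
      (\<Sum>i'<3. \<Sum>j'<3. F i' j' * R i' i * R j' j) * (\<Sum>l'<3. \<Sum>m'<3. G l' m' * R l' l * R m' m) *
      K j l * U i l * V j m) =
    (\<Sum>i'<3. \<Sum>j'<3. \<Sum>l'<3. \<Sum>m'<3. F i' j' * G l' m' *
      (\<Sum>i<3. \<Sum>j<3. R i' i * R j' j *
        (\<Sum>l<3. \<Sum>m<3. R l' l * R m' m * (K j l * U i l * V j m))))"
proof -
  define X where "X i j = (\<Sum>i'<3. \<Sum>j'<3. F i' j' * R i' i * R j' j)" for i j
  define Y where "Y l m = (\<Sum>l'<3. \<Sum>m'<3. G l' m' * R l' l * R m' m)" for l m
  define W where "W i j l' m' = (\<Sum>l<3. \<Sum>m<3. R l' l * R m' m * (K j l * U i l * V j m))" for i j l' m'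
  have "(\<Sum>i<3. \<Sum>j<3. \<Sum>l<3. \<Sum>m<3. X i j * Y l m * K j l * U i l * V j m) =
      (\<Sum>i<3. \<Sum>j<3. X i j * (\<Sum>l<3. \<Sum>m<3. Y l m * (K j l * U i l * V j m)))"
    by (simp add: sum_distrib_left mult.assoc)
  also have "\<dots> = (\<Sum>i<3. \<Sum>j<3. X i j * (\<Sum>l'<3. \<Sum>m'<3. G l' m' * W i j l' m'))"
    unfolding Y_def W_def by (simp only: sum2_pullback)
  also have "\<dots> = (\<Sum>i'<3. \<Sum>j'<3. F i' j' *
      (\<Sum>i<3. \<Sum>j<3. R i' i * R j' j * (\<Sum>l'<3. \<Sum>m'<3. G l' m' * W i j l' m')))"
    unfolding X_def by (rule sum2_pullback)
  also have "\<dots> = (\<Sum>i'<3. \<Sum>j'<3. F i' j' *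
      (\<Sum>l'<3. \<Sum>m'<3. G l' m' * (\<Sum>i<3. \<Sum>j<3. R i' i * R j' j * W i j l' m')))"
    by (rule sum.cong[OF refl], rule sum.cong[OF refl], rule arg_cong[where f = "(*) _"])
      (rule sum2_mult_sum2_swap)
  also have "\<dots> = (\<Sum>i'<3. \<Sum>j'<3. \<Sum>l'<3. \<Sum>m'<3. F i' j' * G l' m' *
      (\<Sum>i<3. \<Sum>j<3. R i' i * R j' j * W i j l' m'))"
    by (simp add: sum_distrib_left mult.assoc)
  finally show ?thesis unfolding X_def Y_def W_def .
qed

lemma sum4_pair_regroup:
  fixes F G c :: "nat \<Rightarrow> nat \<Rightarrow> 'a::comm_ring_1" and U V :: "nat \<Rightarrow> nat \<Rightarrow> nat \<Rightarrow> 'a" and R S :: "nat \<Rightarrow> 'a"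
  shows "(\<Sum>i'<3. \<Sum>j'<3. \<Sum>l'<3. \<Sum>m'<3.
      F i' j' * G l' m' * (c j' l' * (\<Sum>k<3. U i' l' k * R k) * (\<Sum>k<3. V j' m' k * S k))) =
    (\<Sum>i<3. \<Sum>j<3. (\<Sum>i'<3. \<Sum>j'<3. \<Sum>l'<3. \<Sum>m'<3.
      F i' j' * G l' m' * c j' l' * U i' l' i * V j' m' j) * R i * S j)"
proof -
  have "(\<Sum>i'<3. \<Sum>j'<3. \<Sum>l'<3. \<Sum>m'<3.
      F i' j' * G l' m' * (c j' l' * (\<Sum>k<3. U i' l' k * R k) * (\<Sum>k<3. V j' m' k * S k))) =
    (\<Sum>i'<3. \<Sum>j'<3. \<Sum>l'<3. \<Sum>m'<3. \<Sum>i<3. \<Sum>j<3.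
      F i' j' * G l' m' * c j' l' * U i' l' i * V j' m' j * R i * S j)"
    by (intro sum.cong refl) (simp add: sum_3 algebra_simps)
  also have "\<dots> = (\<Sum>i<3. \<Sum>i'<3. \<Sum>j'<3. \<Sum>l'<3. \<Sum>m'<3. \<Sum>j<3.
      F i' j' * G l' m' * c j' l' * U i' l' i * V j' m' j * R i * S j)"
    by (rule sum_sum4_swap[symmetric])
  also have "\<dots> = (\<Sum>i<3. \<Sum>j<3. \<Sum>i'<3. \<Sum>j'<3. \<Sum>l'<3. \<Sum>m'<3.
      F i' j' * G l' m' * c j' l' * U i' l' i * V j' m' j * R i * S j)"
    by (rule sum.cong[OF refl]) (rule sum_sum4_swap[symmetric])
  also have "\<dots> = (\<Sum>i<3. \<Sum>j<3. (\<Sum>i'<3. \<Sum>j'<3. \<Sum>l'<3. \<Sum>m'<3.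
      F i' j' * G l' m' * c j' l' * U i' l' i * V j' m' j) * R i * S j)"
    by (simp add: sum_distrib_right)
  finally show ?thesis .
qed

text \<open>Each axiom for \<open>B\<close> follows from the one for \<open>A\<close>: both sides are multiplied by copies of
  \<open>P\<close>, rewritten with the homomorphism identities, and \<open>P\<close> is cancelled again.\<close>

locale sb_iso_transfer = sb_iso_witness +
  assumes superbialg_A: "superbialg3 A"
begin

lemma mu_grading_B: "\<forall>i<3. \<forall>j<3. \<forall>k<3. mu B i j k \<noteq> 0 \<longrightarrow> par k = (par i + par j) mod 2"
  unfolding all_less_3
  by (simp add: mu_B_eq sum_3 P_mixed_parity Q_mixed_parity mu_parity_zero[OF superbialg_A])

lemma un_odd_B: "un B 2 = 0"
  using un_hom[of 2] by (simp add: sum_3 P_mixed_parity un_odd[OF superbialg_A])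

lemma co_grading_B: "\<forall>k<3. \<forall>i<3. \<forall>j<3. co B k i j \<noteq> 0 \<longrightarrow> (par i + par j) mod 2 = par k"
  unfolding all_less_3
  by (simp add: co_B_eq sum_3 P_mixed_parity Q_mixed_parity co_parity_zero[OF superbialg_A])

lemma cu_odd_B: "cu B 2 = 0"
  by (simp add: cu_B_eq sum_3 Q_mixed_parity cu_odd[OF superbialg_A])


lemma mu_assoc_B:
  "\<forall>i<3. \<forall>j<3. \<forall>l<3. \<forall>n<3. (\<Sum>k<3. mu B i j k * mu B k l n) = (\<Sum>k<3. mu B j l k * mu B i k n)"
proof (intro allI impI)
  fix i j l n :: nat assume h: "i < 3" "j < 3" "l < 3" "n < 3"
  have left: "(\<Sum>i<3. \<Sum>j<3. \<Sum>l<3. P a i * P b j * P d l * (\<Sum>k<3. mu B i j k * mu B k l n)) =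
      (\<Sum>m<3. (\<Sum>k'<3. mu A a b k' * mu A k' d m) * P m n)"
    if abd: "a < 3" "b < 3" "d < 3" for a b d
  proof -
    have "(\<Sum>i<3. \<Sum>j<3. \<Sum>l<3. P a i * P b j * P d l * (\<Sum>k<3. mu B i j k * mu B k l n)) =
        (\<Sum>k<3. \<Sum>l<3. (\<Sum>i<3. \<Sum>j<3. P a i * P b j * mu B i j k) * P d l * mu B k l n)"
      by (simp add: sum_3 algebra_simps)
    also have "\<dots> = (\<Sum>k<3. \<Sum>l<3. (\<Sum>k'<3. mu A a b k' * P k' k) * P d l * mu B k l n)"
      using abd by (simp add: mu_hom)
    also have "\<dots> = (\<Sum>k'<3. mu A a b k' * (\<Sum>k<3. \<Sum>l<3. P k' k * P d l * mu B k l n))"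
      by (simp add: sum_3 algebra_simps)
    also have "\<dots> = (\<Sum>k'<3. mu A a b k' * (\<Sum>m<3. mu A k' d m * P m n))"
      using abd h by (simp add: mu_hom)
    finally show ?thesis by (simp add: sum_3 algebra_simps)
  qed
  have right: "(\<Sum>i<3. \<Sum>j<3. \<Sum>l<3. P a i * P b j * P d l * (\<Sum>k<3. mu B j l k * mu B i k n)) =
      (\<Sum>m<3. (\<Sum>k'<3. mu A b d k' * mu A a k' m) * P m n)"
    if abd: "a < 3" "b < 3" "d < 3" for a b d
  proof -
    have "(\<Sum>i<3. \<Sum>j<3. \<Sum>l<3. P a i * P b j * P d l * (\<Sum>k<3. mu B j l k * mu B i k n)) =
        (\<Sum>i<3. \<Sum>k<3. P a i * (\<Sum>j<3. \<Sum>l<3. P b j * P d l * mu B j l k) * mu B i k n)"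
      by (simp add: sum_3 algebra_simps)
    also have "\<dots> = (\<Sum>i<3. \<Sum>k<3. P a i * (\<Sum>k'<3. mu A b d k' * P k' k) * mu B i k n)"
      using abd by (simp add: mu_hom)
    also have "\<dots> = (\<Sum>k'<3. mu A b d k' * (\<Sum>i<3. \<Sum>k<3. P a i * P k' k * mu B i k n))"
      by (simp add: sum_3 algebra_simps)
    also have "\<dots> = (\<Sum>k'<3. mu A b d k' * (\<Sum>m<3. mu A a k' m * P m n))"
      using abd h by (simp add: mu_hom)
    finally show ?thesis by (simp add: sum_3 algebra_simps)
  qed
  have "\<forall>a<3. \<forall>b<3. \<forall>d<3.
      (\<Sum>i<3. \<Sum>j<3. \<Sum>l<3. P a i * P b j * P d l * (\<Sum>k<3. mu B i j k * mu B k l n)) =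
      (\<Sum>i<3. \<Sum>j<3. \<Sum>l<3. P a i * P b j * P d l * (\<Sum>k<3. mu B j l k * mu B i k n))"
    using h by (simp add: left right mu_assoc[OF superbialg_A])
  then show "(\<Sum>k<3. mu B i j k * mu B k l n) = (\<Sum>k<3. mu B j l k * mu B i k n)"
    using inverse_mat3_cancel3[OF inverse, of "\<lambda>i j l. \<Sum>k<3. mu B i j k * mu B k l n"
        "\<lambda>i j l. \<Sum>k<3. mu B j l k * mu B i k n" i j l] h
    by simp
qed


lemma mu_unit_B:
  "\<forall>i<3. \<forall>k<3. (\<Sum>j<3. un B j * mu B j i k) = kd i k \<and> (\<Sum>j<3. un B j * mu B i j k) = kd i k"
proof (intro allI impI conjI)
  fix i k :: nat assume h: "i < 3" "k < 3"
  have "(\<Sum>i<3. P a i * (\<Sum>j<3. un B j * mu B j i k)) = (\<Sum>i<3. P a i * kd i k)" if a: "a < 3" for a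
  proof -
    have "(\<Sum>i<3. P a i * (\<Sum>j<3. un B j * mu B j i k)) =
        (\<Sum>i<3. P a i * (\<Sum>j<3. (\<Sum>c<3. un A c * P c j) * mu B j i k))"
      by (simp add: un_hom)
    also have "\<dots> = (\<Sum>c<3. un A c * (\<Sum>j<3. \<Sum>i<3. P c j * P a i * mu B j i k))"
      by (simp add: sum_3 algebra_simps)
    also have "\<dots> = (\<Sum>c<3. un A c * (\<Sum>m<3. mu A c a m * P m k))"
      using a h by (simp add: mu_hom)
    also have "\<dots> = (\<Sum>m<3. (\<Sum>c<3. un A c * mu A c a m) * P m k)"
      by (simp add: sum_3 algebra_simps)
    also have "\<dots> = (\<Sum>i<3. P a i * kd i k)"
      using a h by (simp add: mu_unit_left[OF superbialg_A] sum_kd_left sum_kd_right)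
    finally show ?thesis .
  qed
  then show "(\<Sum>j<3. un B j * mu B j i k) = kd i k"
    using inverse_mat3_cancel1[OF inverse, of "\<lambda>i. \<Sum>j<3. un B j * mu B j i k" "\<lambda>i. kd i k" i] h by simp
  have "(\<Sum>i<3. P a i * (\<Sum>j<3. un B j * mu B i j k)) = (\<Sum>i<3. P a i * kd i k)" if a: "a < 3" for a
  proof -
    have "(\<Sum>i<3. P a i * (\<Sum>j<3. un B j * mu B i j k)) =
        (\<Sum>i<3. P a i * (\<Sum>j<3. (\<Sum>c<3. un A c * P c j) * mu B i j k))"
      by (simp add: un_hom)
    also have "\<dots> = (\<Sum>c<3. un A c * (\<Sum>i<3. \<Sum>j<3. P a i * P c j * mu B i j k))"
      by (simp add: sum_3 algebra_simps)
    also have "\<dots> = (\<Sum>c<3. un A c * (\<Sum>m<3. mu A a c m * P m k))"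
      using a h by (simp add: mu_hom)
    also have "\<dots> = (\<Sum>m<3. (\<Sum>c<3. un A c * mu A a c m) * P m k)"
      by (simp add: sum_3 algebra_simps)
    also have "\<dots> = (\<Sum>i<3. P a i * kd i k)"
      using a h by (simp add: mu_unit_right[OF superbialg_A] sum_kd_left sum_kd_right)
    finally show ?thesis .
  qed
  then show "(\<Sum>j<3. un B j * mu B i j k) = kd i k"
    using inverse_mat3_cancel1[OF inverse, of "\<lambda>i. \<Sum>j<3. un B j * mu B i j k" "\<lambda>i. kd i k" i] h by simp
qed

lemma co_assoc_B:
  "\<forall>k<3. \<forall>a<3. \<forall>b<3. \<forall>c<3. (\<Sum>i<3. co B k i c * co B i a b) = (\<Sum>j<3. co B k a j * co B j b c)"
proof (intro allI impI)
  fix k a b c :: nat assume h: "k < 3" "a < 3" "b < 3" "c < 3"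
  have "(\<Sum>k<3. P k0 k * (\<Sum>i<3. co B k i c * co B i a b)) =
      (\<Sum>k<3. P k0 k * (\<Sum>j<3. co B k a j * co B j b c))" if k0: "k0 < 3" for k0
  proof -
    have "(\<Sum>k<3. P k0 k * (\<Sum>i<3. co B k i c * co B i a b)) =
        (\<Sum>i<3. (\<Sum>k<3. P k0 k * co B k i c) * co B i a b)"
      by (simp add: sum_3 algebra_simps)
    also have "\<dots> = (\<Sum>i<3. (\<Sum>i'<3. \<Sum>c'<3. co A k0 i' c' * P i' i * P c' c) * co B i a b)"
      using k0 h by (simp add: co_hom)
    also have "\<dots> = (\<Sum>i'<3. \<Sum>c'<3. co A k0 i' c' * P c' c * (\<Sum>i<3. P i' i * co B i a b))"
      by (simp add: sum_3 algebra_simps)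
    also have "\<dots> = (\<Sum>i'<3. \<Sum>c'<3. co A k0 i' c' * P c' c *
        (\<Sum>a'<3. \<Sum>b'<3. co A i' a' b' * P a' a * P b' b))"
      using h by (simp add: co_hom)
    also have "\<dots> = (\<Sum>a'<3. \<Sum>b'<3. \<Sum>c'<3.
        (\<Sum>i'<3. co A k0 i' c' * co A i' a' b') * P a' a * P b' b * P c' c)"
      by (simp add: sum_3 algebra_simps)
    also have "\<dots> = (\<Sum>a'<3. \<Sum>b'<3. \<Sum>c'<3.
        (\<Sum>j'<3. co A k0 a' j' * co A j' b' c') * P a' a * P b' b * P c' c)"
      using k0 by (simp add: co_assoc[OF superbialg_A])
    also have "\<dots> = (\<Sum>a'<3. \<Sum>j'<3. co A k0 a' j' * P a' a *
        (\<Sum>b'<3. \<Sum>c'<3. co A j' b' c' * P b' b * P c' c))"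
      by (simp add: sum_3 algebra_simps)
    also have "\<dots> = (\<Sum>a'<3. \<Sum>j'<3. co A k0 a' j' * P a' a * (\<Sum>j<3. P j' j * co B j b c))"
      using h by (simp add: co_hom)
    also have "\<dots> = (\<Sum>j<3. (\<Sum>a'<3. \<Sum>j'<3. co A k0 a' j' * P a' a * P j' j) * co B j b c)"
      by (simp add: sum_3 algebra_simps)
    also have "\<dots> = (\<Sum>j<3. (\<Sum>k<3. P k0 k * co B k a j) * co B j b c)"
      using k0 h by (simp add: co_hom)
    also have "\<dots> = (\<Sum>k<3. P k0 k * (\<Sum>j<3. co B k a j * co B j b c))"
      by (simp add: sum_3 algebra_simps)
    finally show ?thesis .
  qed
  then show "(\<Sum>i<3. co B k i c * co B i a b) = (\<Sum>j<3. co B k a j * co B j b c)"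
    using inverse_mat3_cancel1[OF inverse, of "\<lambda>k. \<Sum>i<3. co B k i c * co B i a b"
        "\<lambda>k. \<Sum>j<3. co B k a j * co B j b c" k] h
    by simp
qed

lemma co_counit_left_B: "\<forall>k<3. \<forall>j<3. (\<Sum>i<3. cu B i * co B k i j) = kd k j"
proof (intro allI impI)
  fix k j :: nat assume h: "k < 3" "j < 3"
  have "(\<Sum>k<3. P k0 k * (\<Sum>i<3. cu B i * co B k i j)) = (\<Sum>k<3. P k0 k * kd k j)"
    if k0: "k0 < 3" for k0
  proof -
    have "(\<Sum>k<3. P k0 k * (\<Sum>i<3. cu B i * co B k i j)) =
        (\<Sum>i<3. cu B i * (\<Sum>k<3. P k0 k * co B k i j))"
      by (simp add: sum_3 algebra_simps)
    also have "\<dots> = (\<Sum>i<3. cu B i * (\<Sum>i'<3. \<Sum>j'<3. co A k0 i' j' * P i' i * P j' j))"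
      using k0 h by (simp add: co_hom)
    also have "\<dots> = (\<Sum>i'<3. \<Sum>j'<3. co A k0 i' j' * (\<Sum>i<3. P i' i * cu B i) * P j' j)"
      by (simp add: sum_3 algebra_simps)
    also have "\<dots> = (\<Sum>j'<3. (\<Sum>i'<3. cu A i' * co A k0 i' j') * P j' j)"
      by (simp add: cu_hom) (simp add: sum_3 algebra_simps)
    also have "\<dots> = (\<Sum>k<3. P k0 k * kd k j)"
      using k0 h by (simp add: co_counit_left[OF superbialg_A] sum_kd_left sum_kd_right)
    finally show ?thesis .
  qed
  then show "(\<Sum>i<3. cu B i * co B k i j) = kd k j"
    using inverse_mat3_cancel1[OF inverse, of "\<lambda>k. \<Sum>i<3. cu B i * co B k i j" "\<lambda>k. kd k j" k] h by simp
qed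

lemma co_counit_right_B: "\<forall>k<3. \<forall>i<3. (\<Sum>j<3. co B k i j * cu B j) = kd k i"
proof (intro allI impI)
  fix k i :: nat assume h: "k < 3" "i < 3"
  have "(\<Sum>k<3. P k0 k * (\<Sum>j<3. co B k i j * cu B j)) = (\<Sum>k<3. P k0 k * kd k i)"
    if k0: "k0 < 3" for k0
  proof -
    have "(\<Sum>k<3. P k0 k * (\<Sum>j<3. co B k i j * cu B j)) =
        (\<Sum>j<3. (\<Sum>k<3. P k0 k * co B k i j) * cu B j)"
      by (simp add: sum_3 algebra_simps)
    also have "\<dots> = (\<Sum>j<3. (\<Sum>i'<3. \<Sum>j'<3. co A k0 i' j' * P i' i * P j' j) * cu B j)"
      using k0 h by (simp add: co_hom)
    also have "\<dots> = (\<Sum>i'<3. \<Sum>j'<3. co A k0 i' j' * P i' i * (\<Sum>j<3. P j' j * cu B j))"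
      by (simp add: sum_3 algebra_simps)
    also have "\<dots> = (\<Sum>i'<3. (\<Sum>j'<3. co A k0 i' j' * cu A j') * P i' i)"
      by (simp add: cu_hom) (simp add: sum_3 algebra_simps)
    also have "\<dots> = (\<Sum>k<3. P k0 k * kd k i)"
      using k0 h by (simp add: co_counit_right[OF superbialg_A] sum_kd_left sum_kd_right)
    finally show ?thesis .
  qed
  then show "(\<Sum>j<3. co B k i j * cu B j) = kd k i"
    using inverse_mat3_cancel1[OF inverse, of "\<lambda>k. \<Sum>j<3. co B k i j * cu B j" "\<lambda>k. kd k i" k] h by simp
qed

lemma co_unit_B: "\<forall>i<3. \<forall>j<3. (\<Sum>k<3. un B k * co B k i j) = un B i * un B j"
proof (intro allI impI)
  fix i j :: nat assume h: "i < 3" "j < 3"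
  have "(\<Sum>k<3. un B k * co B k i j) = (\<Sum>k<3. (\<Sum>c<3. un A c * P c k) * co B k i j)"
    by (simp add: un_hom)
  also have "\<dots> = (\<Sum>c<3. un A c * (\<Sum>k<3. P c k * co B k i j))"
    by (simp add: sum_3 algebra_simps)
  also have "\<dots> = (\<Sum>c<3. un A c * (\<Sum>i'<3. \<Sum>j'<3. co A c i' j' * P i' i * P j' j))"
    using h by (simp add: co_hom)
  also have "\<dots> = (\<Sum>i'<3. \<Sum>j'<3. (\<Sum>c<3. un A c * co A c i' j') * P i' i * P j' j)"
    by (simp add: sum_3 algebra_simps)
  also have "\<dots> = (\<Sum>i'<3. \<Sum>j'<3. un A i' * un A j' * P i' i * P j' j)"
    by (simp add: co_unit[OF superbialg_A])
  also have "\<dots> = (\<Sum>i'<3. un A i' * P i' i) * (\<Sum>j'<3. un A j' * P j' j)"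
    by (simp add: sum_3 algebra_simps)
  also have "\<dots> = un B i * un B j"
    using h by (simp add: un_hom)
  finally show "(\<Sum>k<3. un B k * co B k i j) = un B i * un B j" .
qed

lemma cu_unit_B: "(\<Sum>k<3. un B k * cu B k) = 1"
proof -
  have "(\<Sum>k<3. un B k * cu B k) = (\<Sum>k<3. (\<Sum>c<3. un A c * P c k) * cu B k)"
    by (simp add: un_hom)
  also have "\<dots> = (\<Sum>c<3. un A c * (\<Sum>k<3. P c k * cu B k))"
    by (simp add: sum_3 algebra_simps)
  also have "\<dots> = 1"
    by (simp add: cu_hom cu_unit[OF superbialg_A])
  finally show ?thesis .
qed

lemma cu_mult_B: "\<forall>i<3. \<forall>j<3. (\<Sum>k<3. mu B i j k * cu B k) = cu B i * cu B j"
proof (intro allI impI)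
  fix i j :: nat assume h: "i < 3" "j < 3"
  have "(\<Sum>i<3. \<Sum>j<3. P a i * P b j * (\<Sum>k<3. mu B i j k * cu B k)) =
      (\<Sum>i<3. \<Sum>j<3. P a i * P b j * (cu B i * cu B j))" if ab: "a < 3" "b < 3" for a b
  proof -
    have "(\<Sum>i<3. \<Sum>j<3. P a i * P b j * (\<Sum>k<3. mu B i j k * cu B k)) =
        (\<Sum>k<3. (\<Sum>i<3. \<Sum>j<3. P a i * P b j * mu B i j k) * cu B k)"
      by (simp add: sum_3 algebra_simps)
    also have "\<dots> = (\<Sum>k<3. (\<Sum>k'<3. mu A a b k' * P k' k) * cu B k)"
      using ab by (simp add: mu_hom)
    also have "\<dots> = (\<Sum>k'<3. mu A a b k' * (\<Sum>k<3. P k' k * cu B k))"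
      by (simp add: sum_3 algebra_simps)
    also have "\<dots> = (\<Sum>i<3. P a i * cu B i) * (\<Sum>j<3. P b j * cu B j)"
      using ab by (simp add: cu_hom cu_mult[OF superbialg_A])
    also have "\<dots> = (\<Sum>i<3. \<Sum>j<3. P a i * P b j * (cu B i * cu B j))"
      by (simp add: sum_3 algebra_simps)
    finally show ?thesis .
  qed
  then show "(\<Sum>k<3. mu B i j k * cu B k) = cu B i * cu B j"
    using inverse_mat3_cancel2[OF inverse, of "\<lambda>i j. \<Sum>k<3. mu B i j k * cu B k"
        "\<lambda>i j. cu B i * cu B j" i j] h
    by simp
qed


lemma signed_mu_mu_hom:
  assumes idx: "i' < 3" "j' < 3" "l' < 3" "m' < 3" "p < 3" "q < 3"
  shows "(\<Sum>i<3. \<Sum>j<3. P i' i * P j' j *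
      (\<Sum>l<3. \<Sum>m<3. P l' l * P m' m * (ksign j l * mu B i l p * mu B j m q))) =
    ksign j' l' * (\<Sum>k<3. mu A i' l' k * P k p) * (\<Sum>k<3. mu A j' m' k * P k q)"
proof -
  have par_P: "par x = par y" if "x < 3" "y < 3" "P x y \<noteq> 0" for x y
    using parity that unfolding parity_preserving_def by blast
  have sign: "P i' i * P j' j * (P l' l * P m' m * (ksign j l * Y * Z)) =
      P i' i * P j' j * (P l' l * P m' m * (ksign j' l' * Y * Z))" if "j < 3" "l < 3" for i j l m Y Z
  proof (cases "P j' j = 0 \<or> P l' l = 0")
    case False
    then have "par j' = par j" "par l' = par l" using par_P idx that by auto
    then show ?thesis by (simp add: ksign_def)
  qed auto
  have "(\<Sum>i<3. \<Sum>j<3. P i' i * P j' j *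
      (\<Sum>l<3. \<Sum>m<3. P l' l * P m' m * (ksign j l * mu B i l p * mu B j m q))) =
    (\<Sum>i<3. \<Sum>j<3. P i' i * P j' j *
      (\<Sum>l<3. \<Sum>m<3. P l' l * P m' m * (ksign j' l' * mu B i l p * mu B j m q)))"
    unfolding sum_distrib_left by (intro sum.cong refl) (simp add: sign)
  also have "\<dots> = ksign j' l' * (\<Sum>i<3. \<Sum>l<3. P i' i * P l' l * mu B i l p) *
      (\<Sum>j<3. \<Sum>m<3. P j' j * P m' m * mu B j m q)"
    by (simp add: sum_3 algebra_simps)
  also have "\<dots> = ksign j' l' * (\<Sum>k<3. mu A i' l' k * P k p) * (\<Sum>k<3. mu A j' m' k * P k q)"
    using idx by (simp add: mu_hom)
  finally show ?thesis .
qed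

lemma co_mult_B: "\<forall>a<3. \<forall>b<3. \<forall>p<3. \<forall>q<3. (\<Sum>k<3. mu B a b k * co B k p q) =
    (\<Sum>i<3. \<Sum>j<3. \<Sum>l<3. \<Sum>m<3. co B a i j * co B b l m * ksign j l * mu B i l p * mu B j m q)"
proof (intro allI impI)
  fix a b p q :: nat assume h: "a < 3" "b < 3" "p < 3" "q < 3"
  have "(\<Sum>a<3. \<Sum>b<3. P a0 a * P b0 b * (\<Sum>k<3. mu B a b k * co B k p q)) =
      (\<Sum>a<3. \<Sum>b<3. P a0 a * P b0 b * (\<Sum>i<3. \<Sum>j<3. \<Sum>l<3. \<Sum>m<3.
        co B a i j * co B b l m * ksign j l * mu B i l p * mu B j m q))"
    if ab: "a0 < 3" "b0 < 3" for a0 b0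
  proof -
    have "(\<Sum>a<3. \<Sum>b<3. P a0 a * P b0 b * (\<Sum>k<3. mu B a b k * co B k p q)) =
        (\<Sum>k<3. (\<Sum>a<3. \<Sum>b<3. P a0 a * P b0 b * mu B a b k) * co B k p q)"
      by (simp add: sum_3 algebra_simps)
    also have "\<dots> = (\<Sum>k<3. (\<Sum>k'<3. mu A a0 b0 k' * P k' k) * co B k p q)"
      using ab by (simp add: mu_hom)
    also have "\<dots> = (\<Sum>k'<3. mu A a0 b0 k' * (\<Sum>k<3. P k' k * co B k p q))"
      by (simp add: sum_3 algebra_simps)
    also have "\<dots> = (\<Sum>k'<3. mu A a0 b0 k' * (\<Sum>i<3. \<Sum>j<3. co A k' i j * P i p * P j q))"
      using h by (simp add: co_hom)
    also have "\<dots> = (\<Sum>i<3. \<Sum>j<3. (\<Sum>k'<3. mu A a0 b0 k' * co A k' i j) * P i p * P j q)"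
      by (simp add: sum_3 algebra_simps)
    also have "\<dots> = (\<Sum>i<3. \<Sum>j<3. (\<Sum>i'<3. \<Sum>j'<3. \<Sum>l'<3. \<Sum>m'<3.
        co A a0 i' j' * co A b0 l' m' * ksign j' l' * mu A i' l' i * mu A j' m' j) * P i p * P j q)"
      using ab by (simp add: co_mult[OF superbialg_A])
    also have "\<dots> = (\<Sum>i'<3. \<Sum>j'<3. \<Sum>l'<3. \<Sum>m'<3. co A a0 i' j' * co A b0 l' m' *
        (ksign j' l' * (\<Sum>k<3. mu A i' l' k * P k p) * (\<Sum>k<3. mu A j' m' k * P k q)))"
      by (rule sum4_pair_regroup[symmetric])
    also have "\<dots> = (\<Sum>i'<3. \<Sum>j'<3. \<Sum>l'<3. \<Sum>m'<3. co A a0 i' j' * co A b0 l' m' *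
        (\<Sum>i<3. \<Sum>j<3. P i' i * P j' j *
          (\<Sum>l<3. \<Sum>m<3. P l' l * P m' m * (ksign j l * mu B i l p * mu B j m q))))"
      using h by (simp add: signed_mu_mu_hom)
    also have "\<dots> = (\<Sum>i<3. \<Sum>j<3. \<Sum>l<3. \<Sum>m<3.
        (\<Sum>i'<3. \<Sum>j'<3. co A a0 i' j' * P i' i * P j' j) *
        (\<Sum>l'<3. \<Sum>m'<3. co A b0 l' m' * P l' l * P m' m) * ksign j l * mu B i l p * mu B j m q)"
      by (rule sum4_pullback_regroup[symmetric])
    also have "\<dots> = (\<Sum>i<3. \<Sum>j<3. \<Sum>l<3. \<Sum>m<3. (\<Sum>a<3. P a0 a * co B a i j) *
        (\<Sum>b<3. P b0 b * co B b l m) * ksign j l * mu B i l p * mu B j m q)"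
      using ab by (simp add: co_hom)
    also have "\<dots> = (\<Sum>a<3. \<Sum>b<3. P a0 a * P b0 b * (\<Sum>i<3. \<Sum>j<3. \<Sum>l<3. \<Sum>m<3.
        co B a i j * co B b l m * ksign j l * mu B i l p * mu B j m q))"
      by (rule sum_pair_sum4_regroup[symmetric])
    finally show ?thesis .
  qed
  then show "(\<Sum>k<3. mu B a b k * co B k p q) =
      (\<Sum>i<3. \<Sum>j<3. \<Sum>l<3. \<Sum>m<3. co B a i j * co B b l m * ksign j l * mu B i l p * mu B j m q)"
    using inverse_mat3_cancel2[OF inverse, of "\<lambda>a b. \<Sum>k<3. mu B a b k * co B k p q"
        "\<lambda>a b. \<Sum>i<3. \<Sum>j<3. \<Sum>l<3. \<Sum>m<3. co B a i j * co B b l m * ksign j l * mu B i l p * mu B j m q"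
        a b] h
    by simp
qed

theorem superbialg3_B: "superbialg3 B"
  unfolding superbialg3_def
  by (intro conjI mu_grading_B un_odd_B co_grading_B cu_odd_B mu_assoc_B mu_unit_B co_assoc_B
      co_counit_left_B co_counit_right_B co_unit_B cu_unit_B cu_mult_B co_mult_B)

end


definition mat3_mult :: "(nat \<Rightarrow> nat \<Rightarrow> 'a::semiring_0) \<Rightarrow> (nat \<Rightarrow> nat \<Rightarrow> 'a) \<Rightarrow> nat \<Rightarrow> nat \<Rightarrow> 'a" where
  "mat3_mult P R = (\<lambda>i k. \<Sum>j<3. P i j * R j k)"

lemma parity_preserving_mat3_mult:
  "parity_preserving P \<Longrightarrow> parity_preserving R \<Longrightarrow> parity_preserving (mat3_mult P R)"
  unfolding parity_preserving_iff mat3_mult_def by (simp add: sum_3)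

lemma inverse_mat3_mult:
  fixes P Q R S :: "nat \<Rightarrow> nat \<Rightarrow> 'a::comm_ring_1"
  assumes "inverse_mat3 P Q" "inverse_mat3 R S"
  shows "inverse_mat3 (mat3_mult P R) (mat3_mult S Q)"
proof -
  have assoc: "(\<Sum>j<3. (\<Sum>m<3. X i m * Y m j) * (\<Sum>n<3. Z j n * T n k)) =
      (\<Sum>m<3. \<Sum>n<3. X i m * (\<Sum>j<3. Y m j * Z j n) * T n k)" for X Y Z T :: "nat \<Rightarrow> nat \<Rightarrow> 'a" and i k
    by (simp add: sum_3 algebra_simps)
  have kd_middle: "(\<Sum>m<3. \<Sum>n<3. X i m * kd m n * T n k) = (\<Sum>m<3. X i m * T m k)"
    for X T :: "nat \<Rightarrow> nat \<Rightarrow> 'a" and i k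
    by (simp add: sum_3 kd_def)
  show ?thesis
    using assms unfolding inverse_mat3_def mat3_mult_def
    by (simp add: assoc cong: sum.cong) (simp add: kd_middle)
qed



lemma sb_hom_comp:
  assumes AB: "sb_hom A B P" and BC: "sb_hom B C R"
  shows "sb_hom A C (mat3_mult P R)"
  unfolding sb_hom_def mat3_mult_def
proof (intro conjI allI impI)
  fix a b c :: nat assume h: "a < 3" "b < 3" "c < 3"
  have "(\<Sum>k<3. mu A a b k * (\<Sum>m<3. P k m * R m c)) = (\<Sum>m<3. (\<Sum>k<3. mu A a b k * P k m) * R m c)"
    by (simp add: sum_3 algebra_simps)
  also have "\<dots> = (\<Sum>m<3. (\<Sum>i<3. \<Sum>j<3. P a i * P b j * mu B i j m) * R m c)"
    using h by (simp add: sb_hom_mu[OF AB])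
  also have "\<dots> = (\<Sum>i<3. \<Sum>j<3. P a i * P b j * (\<Sum>m<3. mu B i j m * R m c))"
    by (simp add: sum_3 algebra_simps)
  also have "\<dots> = (\<Sum>i<3. \<Sum>j<3. P a i * P b j * (\<Sum>i'<3. \<Sum>j'<3. R i i' * R j j' * mu C i' j' c))"
    using h by (simp add: sb_hom_mu[OF BC])
  also have "\<dots> = (\<Sum>i'<3. \<Sum>j'<3. (\<Sum>i<3. P a i * R i i') * (\<Sum>j<3. P b j * R j j') * mu C i' j' c)"
    by (simp add: sum_3 algebra_simps)
  finally show "(\<Sum>k<3. mu A a b k * (\<Sum>j<3. P k j * R j c)) =
      (\<Sum>i<3. \<Sum>j<3. (\<Sum>j'<3. P a j' * R j' i) * (\<Sum>j'<3. P b j' * R j' j) * mu C i j c)" .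
next
  fix c :: nat assume h: "c < 3"
  have "(\<Sum>k<3. un A k * (\<Sum>j<3. P k j * R j c)) = (\<Sum>j<3. (\<Sum>k<3. un A k * P k j) * R j c)"
    by (simp add: sum_3 algebra_simps)
  also have "\<dots> = un C c"
    using h by (simp add: sb_hom_un[OF AB] sb_hom_un[OF BC])
  finally show "(\<Sum>k<3. un A k * (\<Sum>j<3. P k j * R j c)) = un C c" .
next
  fix a p q :: nat assume h: "a < 3" "p < 3" "q < 3"
  have "(\<Sum>i<3. \<Sum>j<3. co A a i j * (\<Sum>m<3. P i m * R m p) * (\<Sum>n<3. P j n * R n q)) =
      (\<Sum>m<3. \<Sum>n<3. (\<Sum>i<3. \<Sum>j<3. co A a i j * P i m * P j n) * R m p * R n q)"
    by (simp add: sum_3 algebra_simps)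
  also have "\<dots> = (\<Sum>m<3. \<Sum>n<3. (\<Sum>k<3. P a k * co B k m n) * R m p * R n q)"
    using h by (simp add: sb_hom_co[OF AB])
  also have "\<dots> = (\<Sum>k<3. P a k * (\<Sum>m<3. \<Sum>n<3. co B k m n * R m p * R n q))"
    by (simp add: sum_3 algebra_simps)
  also have "\<dots> = (\<Sum>k<3. P a k * (\<Sum>k'<3. R k k' * co C k' p q))"
    using h by (simp add: sb_hom_co[OF BC])
  also have "\<dots> = (\<Sum>k'<3. (\<Sum>k<3. P a k * R k k') * co C k' p q)"
    by (simp add: sum_3 algebra_simps)
  finally show "(\<Sum>i<3. \<Sum>j<3. co A a i j * (\<Sum>j'<3. P i j' * R j' p) * (\<Sum>j'<3. P j j' * R j' q)) =
      (\<Sum>k<3. (\<Sum>j<3. P a j * R j k) * co C k p q)" .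
next
  fix a :: nat assume h: "a < 3"
  have "(\<Sum>k<3. (\<Sum>j<3. P a j * R j k) * cu C k) = (\<Sum>j<3. P a j * (\<Sum>k<3. R j k * cu C k))"
    by (simp add: sum_3 algebra_simps)
  also have "\<dots> = cu A a"
    using h by (simp add: sb_hom_cu[OF AB] sb_hom_cu[OF BC])
  finally show "(\<Sum>k<3. (\<Sum>j<3. P a j * R j k) * cu C k) = cu A a" .
qed

lemma sb_iso_sym: "sb_iso A B \<Longrightarrow> sb_iso B A"
proof -
  assume "sb_iso A B"
  then obtain P Q where "parity_preserving P" "inverse_mat3 P Q" "sb_hom A B P"
    unfolding sb_iso_iff by blast
  then interpret sb_iso_witness A B P Q by unfold_locales
  show "sb_iso B A"
    unfolding sb_iso_iff using parity_Q inverse_mat3_sym[OF inverse] sb_hom_inverse by blast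
qed

lemma sb_iso_trans: "sb_iso A B \<Longrightarrow> sb_iso B C \<Longrightarrow> sb_iso A C"
proof -
  assume "sb_iso A B" "sb_iso B C"
  then obtain P Q R S where P: "parity_preserving P" "inverse_mat3 P Q" "sb_hom A B P"
    and R: "parity_preserving R" "inverse_mat3 R S" "sb_hom B C R"
    unfolding sb_iso_iff by blast
  have "parity_preserving (mat3_mult P R)" using P(1) R(1) by (rule parity_preserving_mat3_mult)
  moreover have "inverse_mat3 (mat3_mult P R) (mat3_mult S Q)" using P(2) R(2) by (rule inverse_mat3_mult)
  moreover have "sb_hom A C (mat3_mult P R)" using P(3) R(3) by (rule sb_hom_comp)
  ultimately show "sb_iso A C" unfolding sb_iso_iff by blast
qed

lemma sb_iso_superbialg3: "sb_iso A B \<Longrightarrow> superbialg3 A \<Longrightarrow> superbialg3 B"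
proof -
  assume "sb_iso A B" "superbialg3 A"
  then obtain P Q where "parity_preserving P" "inverse_mat3 P Q" "sb_hom A B P"
    unfolding sb_iso_iff by blast
  with \<open>superbialg3 A\<close> interpret sb_iso_transfer A B P Q by unfold_locales
  show "superbialg3 B" by (rule superbialg3_B)
qed

definition transport :: "'a::field sbd \<Rightarrow> (nat \<Rightarrow> nat \<Rightarrow> 'a) \<Rightarrow> (nat \<Rightarrow> nat \<Rightarrow> 'a) \<Rightarrow> 'a sbd" where
  "transport A P Q =
    \<lparr>mu = (\<lambda>i j c. \<Sum>a<3. \<Sum>b<3. Q i a * Q j b * (\<Sum>k<3. mu A a b k * P k c)),
     un = (\<lambda>c. \<Sum>k<3. un A k * P k c),
     co = (\<lambda>k p q. \<Sum>a<3. Q k a * (\<Sum>i<3. \<Sum>j<3. co A a i j * P i p * P j q)),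
     cu = (\<lambda>k. \<Sum>a<3. Q k a * cu A a)\<rparr>"

lemma sb_hom_transport:
  assumes "inverse_mat3 P Q"
  shows "sb_hom A (transport A P Q) P"
proof -
  have PQ: "\<And>i k. i < 3 \<Longrightarrow> k < 3 \<Longrightarrow> (\<Sum>j<3. P i j * Q j k) = kd i k"
    using assms unfolding inverse_mat3_def by blast
  show ?thesis unfolding sb_hom_def
  proof (intro conjI allI impI)
    fix a b c :: nat assume h: "a < 3" "b < 3" "c < 3"
    have "(\<Sum>i<3. \<Sum>j<3. P a i * P b j * mu (transport A P Q) i j c) =
        (\<Sum>a'<3. \<Sum>b'<3. (\<Sum>i<3. P a i * Q i a') * (\<Sum>j<3. P b j * Q j b') * (\<Sum>k<3. mu A a' b' k * P k c))"
      by (simp add: transport_def sum_3 algebra_simps)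
    also have "\<dots> = (\<Sum>k<3. mu A a b k * P k c)"
      using h by (simp add: PQ sum_sum_kd_left)
    finally show "(\<Sum>k<3. mu A a b k * P k c) = (\<Sum>i<3. \<Sum>j<3. P a i * P b j * mu (transport A P Q) i j c)"
      by simp
  next
    fix c :: nat show "(\<Sum>k<3. un A k * P k c) = un (transport A P Q) c"
      by (simp add: transport_def)
  next
    fix a p q :: nat assume h: "a < 3" "p < 3" "q < 3"
    have "(\<Sum>k<3. P a k * co (transport A P Q) k p q) =
        (\<Sum>a'<3. (\<Sum>k<3. P a k * Q k a') * (\<Sum>i<3. \<Sum>j<3. co A a' i j * P i p * P j q))"
      by (simp add: transport_def sum_3 algebra_simps)
    also have "\<dots> = (\<Sum>i<3. \<Sum>j<3. co A a i j * P i p * P j q)"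
      using h by (simp add: PQ sum_kd_left)
    finally show "(\<Sum>i<3. \<Sum>j<3. co A a i j * P i p * P j q) = (\<Sum>k<3. P a k * co (transport A P Q) k p q)"
      by simp
  next
    fix a :: nat assume h: "a < 3"
    have "(\<Sum>k<3. P a k * cu (transport A P Q) k) = (\<Sum>a'<3. (\<Sum>k<3. P a k * Q k a') * cu A a')"
      by (simp add: transport_def sum_3 algebra_simps)
    also have "\<dots> = cu A a"
      using h by (simp add: PQ sum_kd_left)
    finally show "(\<Sum>k<3. P a k * cu (transport A P Q) k) = cu A a" .
  qed
qed

lemma sb_iso_transport: "parity_preserving P \<Longrightarrow> inverse_mat3 P Q \<Longrightarrow> sb_iso A (transport A P Q)"
  unfolding sb_iso_iff using sb_hom_transport by blast

lemma sb_iso_if_same_constants: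
  fixes A B :: "'a::field sbd"
  assumes "\<forall>i<3. \<forall>j<3. \<forall>k<3. mu A i j k = mu B i j k" "\<forall>k<3. un A k = un B k"
    "\<forall>k<3. \<forall>i<3. \<forall>j<3. co A k i j = co B k i j" "\<forall>k<3. cu A k = cu B k"
  shows "sb_iso A B"
proof -
  have "parity_preserving (kd :: nat \<Rightarrow> nat \<Rightarrow> 'a)"
    unfolding parity_preserving_iff by (simp add: kd_def)
  moreover have "inverse_mat3 (kd :: nat \<Rightarrow> nat \<Rightarrow> 'a) kd"
    unfolding inverse_mat3_def by (simp add: sum_kd_left)
  moreover have "sb_hom A B kd"
    unfolding sb_hom_def using assms by (simp add: sum_kd_left sum_kd_right sum_sum_kd_left)
  ultimately show ?thesis unfolding sb_iso_iff by blast
qed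

lemma sb_iso_refl: "sb_iso A A"
  by (rule sb_iso_if_same_constants) simp_all

section \<open>Normal forms\<close>

definition block_mat3 :: "'a \<Rightarrow> 'a \<Rightarrow> 'a \<Rightarrow> 'a \<Rightarrow> 'a \<Rightarrow> nat \<Rightarrow> nat \<Rightarrow> 'a::zero" where
  "block_mat3 a b c d e = (\<lambda>i j. if i = 0 \<and> j = 0 then a else if i = 0 \<and> j = 1 then b else
     if i = 1 \<and> j = 0 then c else if i = 1 \<and> j = 1 then d else if i = 2 \<and> j = 2 then e else 0)"

lemma block_mat3_simps [simp]:
  "block_mat3 a b c d e 0 0 = a" "block_mat3 a b c d e 0 1 = b" "block_mat3 a b c d e 1 0 = c"
  "block_mat3 a b c d e 1 1 = d" "block_mat3 a b c d e 2 2 = e"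
  "block_mat3 a b c d e 0 2 = 0" "block_mat3 a b c d e 1 2 = 0"
  "block_mat3 a b c d e 2 0 = 0" "block_mat3 a b c d e 2 1 = 0"
  by (simp_all add: block_mat3_def)

lemma parity_preserving_block_mat3: "parity_preserving (block_mat3 a b c d e)"
  unfolding parity_preserving_iff by simp

lemma inverse_mat3_block_mat3:
  fixes a b c d e a' b' c' d' e' :: "'a::field"
  assumes "a * a' + b * c' = 1" "a * b' + b * d' = 0" "c * a' + d * c' = 0" "c * b' + d * d' = 1"
    "a' * a + b' * c = 1" "a' * b + b' * d = 0" "c' * a + d' * c = 0" "c' * b + d' * d = 1"
    "e * e' = 1"
  shows "inverse_mat3 (block_mat3 a b c d e) (block_mat3 a' b' c' d' e')"
  unfolding inverse_mat3_def all_less_3 using assms by (simp add: sum_3 kd_def mult.commute)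

lemma exists_square_root:
  assumes "\<forall>p :: 'a::field poly. degree p > 0 \<longrightarrow> (\<exists>z. poly p z = 0)"
  shows "\<exists>z::'a. z * z = c"
proof -
  have "degree [:-c, 0, 1:] > 0" by simp
  then obtain z where "poly [:-c, 0, 1:] z = 0" using assms by blast
  then have "z * z = c" by (simp add: algebra_simps)
  then show ?thesis by blast
qed

lemma parity_zero_entries:
  assumes S: "superbialg3 B"
  shows "mu B 1 1 2 = 0" "mu B 1 2 0 = 0" "mu B 1 2 1 = 0" "mu B 2 1 0 = 0" "mu B 2 1 1 = 0"
    "mu B 2 2 2 = 0" "mu B 0 0 2 = 0" "mu B 0 1 2 = 0" "mu B 1 0 2 = 0" "mu B 0 2 0 = 0"
    "mu B 0 2 1 = 0" "mu B 2 0 0 = 0" "mu B 2 0 1 = 0"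
    "co B 0 0 2 = 0" "co B 0 1 2 = 0" "co B 0 2 0 = 0" "co B 0 2 1 = 0"
    "co B 1 0 2 = 0" "co B 1 1 2 = 0" "co B 1 2 0 = 0" "co B 1 2 1 = 0"
    "co B 2 0 0 = 0" "co B 2 0 1 = 0" "co B 2 1 0 = 0" "co B 2 1 1 = 0" "co B 2 2 2 = 0"
    "cu B 2 = 0" "un B 2 = 0"
  by (simp_all add: mu_parity_zero[OF S] co_parity_zero[OF S] cu_odd[OF S] un_odd[OF S])

lemma unit_e0_entries:
  assumes S: "superbialg3 B" and u: "un B 0 = 1" "un B 1 = 0"
  shows "mu B 0 0 0 = 1" "mu B 0 0 1 = 0" "mu B 0 1 0 = 0" "mu B 0 1 1 = 1" "mu B 0 2 2 = 1"
    "mu B 1 0 0 = 0" "mu B 1 0 1 = 1" "mu B 2 0 2 = 1"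
    "cu B 0 = 1" "co B 0 0 0 = 1" "co B 0 0 1 = 0" "co B 0 1 0 = 0" "co B 0 1 1 = 0" "co B 0 2 2 = 0"
proof -
  note u2 = un_odd[OF S]
  have "mu B 0 i k = kd i k" "mu B i 0 k = kd i k" if "i < 3" "k < 3" for i k
    using mu_unit_left[OF S that] mu_unit_right[OF S that] u u2 by (simp_all add: sum_3)
  then show "mu B 0 0 0 = 1" "mu B 0 0 1 = 0" "mu B 0 1 0 = 0" "mu B 0 1 1 = 1" "mu B 0 2 2 = 1"
    "mu B 1 0 0 = 0" "mu B 1 0 1 = 1" "mu B 2 0 2 = 1"
    by (simp_all add: kd_def)
  show "cu B 0 = 1" using cu_unit[OF S] u u2 by (simp add: sum_3)
  have "co B 0 i j = un B i * un B j" if "i < 3" "j < 3" for i j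
    using co_unit[OF S that] u u2 by (simp add: sum_3)
  then show "co B 0 0 0 = 1" "co B 0 0 1 = 0" "co B 0 1 0 = 0" "co B 0 1 1 = 0" "co B 0 2 2 = 0"
    by (simp_all add: u u2)
qed

lemma counit_relations:
  assumes S: "superbialg3 B" and u: "un B 0 = 1" "un B 1 = 0"
  shows "co B 1 0 0 + cu B 1 * co B 1 1 0 = 0" "co B 1 0 1 + cu B 1 * co B 1 1 1 = 1"
    "co B 1 0 0 + cu B 1 * co B 1 0 1 = 0" "co B 1 1 0 + cu B 1 * co B 1 1 1 = 1"
    "co B 2 0 2 + cu B 1 * co B 2 1 2 = 1" "co B 2 2 0 + cu B 1 * co B 2 2 1 = 1"
  using co_counit_left[OF S, of 1 0] co_counit_left[OF S, of 1 1] co_counit_right[OF S, of 1 0]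
    co_counit_right[OF S, of 1 1] co_counit_left[OF S, of 2 2] co_counit_right[OF S, of 2 2]
  by (simp_all add: sum_3 unit_e0_entries[OF S u] parity_zero_entries[OF S] kd_def mult.commute)

lemma counit_relations_x_zero:
  assumes S: "superbialg3 B" and u: "un B 0 = 1" "un B 1 = 0" and e: "cu B 1 = 0"
  shows "co B 1 0 0 = 0" "co B 1 0 1 = 1" "co B 1 1 0 = 1" "co B 2 0 2 = 1" "co B 2 2 0 = 1"
  using counit_relations[OF S u] e by simp_all

lemma co_mult_coeff:
  assumes "superbialg3 A" "a < 3" "b < 3" "p < 3" "q < 3"
    and "(\<Sum>k<3. mu A a b k * co A k p q) = L"
    and "(\<Sum>i<3. \<Sum>j<3. \<Sum>l<3. \<Sum>m<3. co A a i j * co A b l m * ksign j l * mu A i l p * mu A j m q) = R"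
  shows "L = R"
  using co_mult[OF assms(1-5)] assms(6,7) by simp

lemma co_assoc_coeff:
  assumes "superbialg3 A" "k < 3" "a < 3" "b < 3" "c < 3"
    and "(\<Sum>i<3. co A k i c * co A i a b) = L" and "(\<Sum>j<3. co A k a j * co A j b c) = R"
  shows "L = R"
  using co_assoc[OF assms(1-5)] assms(6,7) by simp

lemma exists_iso_unit_e0:
  assumes S: "superbialg3 (A::'a::field sbd)"
  shows "\<exists>B. sb_iso A B \<and> superbialg3 B \<and> un B 0 = 1 \<and> un B 1 = 0"
proof -
  have u2: "un A 2 = 0" by (rule un_odd[OF S])
  have nz: "un A 0 \<noteq> 0 \<or> un A 1 \<noteq> 0" using cu_unit[OF S] u2 by (auto simp: sum_3)
  obtain P Q where PQ: "parity_preserving P" "inverse_mat3 P Q"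
    and uP: "un A 0 * P 0 0 + un A 1 * P 1 0 = 1" "un A 0 * P 0 1 + un A 1 * P 1 1 = 0"
  proof (cases "un A 0 = 0")
    case True
    then show ?thesis
      using nz by (intro that[of "block_mat3 0 1 (1 / un A 1) 0 1" "block_mat3 0 (un A 1) 1 0 1"])
        (simp_all add: parity_preserving_block_mat3 inverse_mat3_block_mat3)
  next
    case False
    then show ?thesis
      by (intro that[of "block_mat3 (1 / un A 0) (- un A 1 / un A 0) 0 1 1" "block_mat3 (un A 0) (un A 1) 0 1 1"])
        (simp_all add: parity_preserving_block_mat3 inverse_mat3_block_mat3 field_simps)
  qed
  have iso: "sb_iso A (transport A P Q)" using PQ by (rule sb_iso_transport)
  moreover have "un (transport A P Q) 0 = 1" "un (transport A P Q) 1 = 0"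
    using uP PQ(1) u2 unfolding parity_preserving_iff by (simp_all add: transport_def sum_3)
  ultimately show ?thesis using sb_iso_superbialg3[OF iso S] by blast
qed

text \<open>\<open>rebase B s t r\<close> is \<open>B\<close> written in the basis \<open>1, s + t x, r y\<close>.\<close>

definition rebase :: "'a::field sbd \<Rightarrow> 'a \<Rightarrow> 'a \<Rightarrow> 'a \<Rightarrow> 'a sbd" where
  "rebase B s t r = transport B (block_mat3 1 0 (- s / t) (1 / t) (1 / r)) (block_mat3 1 0 s t r)"

lemma sb_iso_rebase:
  assumes S: "superbialg3 (B::'a::field sbd)" and t: "t \<noteq> 0" and r: "r \<noteq> 0"
  shows "sb_iso B (rebase B s t r)" "superbialg3 (rebase B s t r)"
proof -
  have "inverse_mat3 (block_mat3 1 0 (- s / t) (1 / t) (1 / r)) (block_mat3 1 0 s t r)"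
    using t r by (simp add: inverse_mat3_block_mat3 field_simps)
  then show iso: "sb_iso B (rebase B s t r)"
    unfolding rebase_def by (rule sb_iso_transport[OF parity_preserving_block_mat3])
  show "superbialg3 (rebase B s t r)" using sb_iso_superbialg3[OF iso S] .
qed

lemma rebase_entries:
  assumes S: "superbialg3 (B::'a::field sbd)" and u: "un B 0 = 1" "un B 1 = 0"
    and t: "t \<noteq> 0" and r: "r \<noteq> 0"
  shows "un (rebase B s t r) 0 = 1" "un (rebase B s t r) 1 = 0"
    "mu (rebase B s t r) 1 1 0 = t^2 * mu B 1 1 0 - s^2 - s * t * mu B 1 1 1"
    "mu (rebase B s t r) 1 1 1 = 2 * s + t * mu B 1 1 1"
    "mu (rebase B s t r) 1 2 2 = s + t * mu B 1 2 2"
    "mu (rebase B s t r) 2 1 2 = s + t * mu B 2 1 2"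
    "mu (rebase B s t r) 2 2 0 = r^2 * (mu B 2 2 0 - mu B 2 2 1 * s / t)"
    "mu (rebase B s t r) 2 2 1 = r^2 * mu B 2 2 1 / t"
    "cu (rebase B s t r) 1 = s + t * cu B 1"
  using u t r unit_e0_entries[OF S u] parity_zero_entries[OF S]
  by (simp_all add: rebase_def transport_def sum_3 field_simps power2_eq_square)

lemma exists_iso_x_square_normal:
  assumes S: "superbialg3 (B::'a::field_char_0 sbd)" and u: "un B 0 = 1" "un B 1 = 0"
    and sqrt: "\<And>c::'a. \<exists>z. z * z = c"
  shows "\<exists>C. sb_iso B C \<and> superbialg3 C \<and> un C 0 = 1 \<and> un C 1 = 0 \<and> mu C 1 1 0 = 0 \<and>
    (mu C 1 1 1 = 1 \<or> mu C 1 1 1 = 0)"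
proof -
  let ?\<alpha> = "mu B 1 1 0" and ?\<beta> = "mu B 1 1 1"
  obtain d where d: "d * d = ?\<beta>^2 + 4 * ?\<alpha>" using sqrt by blast
  show ?thesis
  proof (cases "d = 0")
    case True
    let ?s = "- ?\<beta> / 2"
    have "mu (rebase B ?s 1 1) 1 1 0 = (?\<beta>^2 + 4 * ?\<alpha>) / 4"
      using rebase_entries(3)[OF S u, of 1 1 ?s] by (simp add: field_simps power2_eq_square)
    then have "mu (rebase B ?s 1 1) 1 1 0 = 0" using d True by simp
    moreover have "mu (rebase B ?s 1 1) 1 1 1 = 0"
      using rebase_entries(4)[OF S u, of 1 1 ?s] by simp
    ultimately show ?thesis
      using sb_iso_rebase[OF S, of 1 1 ?s] rebase_entries(1,2)[OF S u, of 1 1 ?s] by auto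
  next
    case False
    let ?s = "(1 - ?\<beta> / d) / 2" and ?t = "1 / d"
    have t: "?t \<noteq> 0" using False by simp
    have "mu (rebase B ?s ?t 1) 1 1 0 = ?t^2 * ?\<alpha> - ?s^2 - ?s * ?t * ?\<beta>"
      using rebase_entries(3)[OF S u t, of 1 ?s] by simp
    also have "\<dots> = (4 * ?\<alpha> + ?\<beta>^2 - d * d) / (4 * d * d)"
      using False by (simp add: field_simps power2_eq_square)
    finally have "mu (rebase B ?s ?t 1) 1 1 0 = 0" using d by simp
    moreover have "mu (rebase B ?s ?t 1) 1 1 1 = 1"
      using rebase_entries(4)[OF S u t, of 1 ?s] False by (simp add: field_simps)
    ultimately show ?thesis
      using sb_iso_rebase[OF S t, of 1 ?s] rebase_entries(1,2)[OF S u t, of 1 ?s] by auto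
  qed
qed

text \<open>If \<open>x\<^sup>2 = 0\<close>, comparing the \<open>y \<otimes> y\<close> coefficients of \<open>\<Delta>(y\<^sup>2) = \<Delta>(y)\<^sup>2\<close> and
  the \<open>x \<otimes> x\<close> coefficients of \<open>0 = \<Delta>(x\<^sup>2) = \<Delta>(x)\<^sup>2\<close> gives \<open>2 = 0\<close>.\<close>

lemma x_square_not_zero:
  assumes S: "superbialg3 (C::'a::field_char_0 sbd)" and u: "un C 0 = 1" "un C 1 = 0"
    and x2: "mu C 1 1 0 = 0" "mu C 1 1 1 = 0"
  shows False
proof -
  note F = unit_e0_entries[OF S u] parity_zero_entries[OF S] x2
  let ?a = "mu C 1 2 2" and ?b = "mu C 2 1 2" and ?s = "mu C 2 2 0" and ?t = "mu C 2 2 1"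
  have "?a * ?a = 0" using mu_assoc[OF S, of 1 1 2 2] F by (simp add: sum_3)
  then have a: "?a = 0" by simp
  have "?b * ?b = 0" using mu_assoc[OF S, of 2 1 1 2] F by (simp add: sum_3)
  then have b: "?b = 0" by simp
  have s: "?s = 0" using mu_assoc[OF S, of 1 2 2 1] F a by (simp add: sum_3)
  have "cu C 1 * cu C 1 = 0" using cu_mult[OF S, of 1 1] F by (simp add: sum_3)
  then have e: "cu C 1 = 0" by simp
  note c = counit_relations_x_zero[OF S u e]
  note G = F a b s e c
  have z: "co C 1 2 2 * ?t = 0"
    by (rule co_mult_coeff[OF S, of 2 2 2 2]) (simp_all add: sum_3 ksign_def G)
  have "0 = 2 - (co C 1 2 2 * ?t) * (co C 1 2 2 * ?t)"
    by (rule co_mult_coeff[OF S, of 1 1 1 1]) (simp_all add: sum_3 ksign_def G algebra_simps)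
  then show False by (simp only: z mult_zero_left) simp
qed

definition has_product :: "'a sbd \<Rightarrow> (nat \<Rightarrow> nat \<Rightarrow> nat \<Rightarrow> 'a) \<Rightarrow> bool" where
  "has_product D M \<longleftrightarrow> (\<forall>i<3. \<forall>j<3. \<forall>k<3. mu D i j k = M i j k)"

lemma has_productD: "has_product D M \<Longrightarrow> i < 3 \<Longrightarrow> j < 3 \<Longrightarrow> k < 3 \<Longrightarrow> mu D i j k = M i j k"
  by (simp add: has_product_def)

lemma idempotent_x_relations:
  assumes S: "superbialg3 (C::'a::field sbd)" and u: "un C 0 = 1" "un C 1 = 0"
    and x2: "mu C 1 1 0 = 0" "mu C 1 1 1 = 1"
  shows "mu C 1 2 2 * mu C 1 2 2 = mu C 1 2 2" "mu C 2 1 2 * mu C 2 1 2 = mu C 2 1 2"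
    "mu C 1 2 2 * mu C 2 2 0 = 0" "mu C 1 2 2 * mu C 2 2 1 = mu C 2 2 0 + mu C 2 2 1"
    "mu C 2 2 1 * mu C 1 2 2 = mu C 2 2 1 * mu C 2 1 2"
  using mu_assoc[OF S, of 1 1 2 2] mu_assoc[OF S, of 2 1 1 2] mu_assoc[OF S, of 1 2 2 0]
    mu_assoc[OF S, of 1 2 2 1] mu_assoc[OF S, of 2 2 2 2]
  by (simp_all add: sum_3 unit_e0_entries[OF S u] parity_zero_entries[OF S] x2)

lemma idempotent_cases: "x * x = x \<Longrightarrow> x = 0 \<or> x = (1::'a::field)"
  by (metis mult_cancel_right2 mult_eq_0_iff)

lemma exists_iso_standard_algebra_xy_y:
  assumes S: "superbialg3 (C::'a::field_char_0 sbd)" and u: "un C 0 = 1" "un C 1 = 0"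
    and x2: "mu C 1 1 0 = 0" "mu C 1 1 1 = 1" and xy: "mu C 1 2 2 = 1"
    and sqrt: "\<And>c::'a. \<exists>z. z * z = c"
  shows "\<exists>D. sb_iso C D \<and> superbialg3 D \<and> un D 0 = 1 \<and> un D 1 = 0 \<and>
    (has_product D mul21 \<or> has_product D mul22 \<or> has_product D mul23)"
proof -
  note I = idempotent_x_relations[OF S u x2]
  note F = unit_e0_entries[OF S u] parity_zero_entries[OF S] x2 xy
  have s: "mu C 2 2 0 = 0" using I(3) xy by simp
  consider "mu C 2 1 2 = 0" | "mu C 2 1 2 = 1" "mu C 2 2 1 = 0" | "mu C 2 1 2 = 1" "mu C 2 2 1 \<noteq> 0"
    using idempotent_cases[OF I(2)] by blast
  then show ?thesis
  proof cases
    case 1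
    then have "mu C 2 2 1 = 0" using I(5) xy by simp
    then have "has_product C mul22"
      unfolding has_product_def all_less_3 using F s 1 by (simp add: mul22_def bv_def)
    then show ?thesis using sb_iso_refl[of C] S u by blast
  next
    case 2
    then have "has_product C mul23"
      unfolding has_product_def all_less_3 using F s by (simp add: mul23_def bv_def)
    then show ?thesis using sb_iso_refl[of C] S u by blast
  next
    case 3
    obtain r where r: "r * r = 1 / mu C 2 2 1" using sqrt by blast
    then have r0: "r \<noteq> 0" using 3 by auto
    have D: "sb_iso C (rebase C 0 1 r)" "superbialg3 (rebase C 0 1 r)"
      using sb_iso_rebase[OF S _ r0, of 1 0] by simp_all
    have V: "un (rebase C 0 1 r) 0 = 1" "un (rebase C 0 1 r) 1 = 0"
      "mu (rebase C 0 1 r) 1 1 0 = 0" "mu (rebase C 0 1 r) 1 1 1 = 1"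
      "mu (rebase C 0 1 r) 1 2 2 = 1" "mu (rebase C 0 1 r) 2 1 2 = 1"
      "mu (rebase C 0 1 r) 2 2 0 = 0" "mu (rebase C 0 1 r) 2 2 1 = 1"
      using rebase_entries[OF S u _ r0, of 1 0] x2 xy s r 3 by (simp_all add: power2_eq_square)
    have "has_product (rebase C 0 1 r) mul21"
      unfolding has_product_def all_less_3
      using unit_e0_entries[OF D(2) V(1,2)] parity_zero_entries[OF D(2)] V
      by (simp add: mul21_def bv_def)
    then show ?thesis using D V by blast
  qed
qed

lemma exists_iso_standard_algebra:
  assumes S: "superbialg3 (C::'a::field_char_0 sbd)" and u: "un C 0 = 1" "un C 1 = 0"
    and x2: "mu C 1 1 0 = 0" "mu C 1 1 1 = 1"
    and sqrt: "\<And>c::'a. \<exists>z. z * z = c"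
  shows "\<exists>D. sb_iso C D \<and> superbialg3 D \<and> un D 0 = 1 \<and> un D 1 = 0 \<and>
    (has_product D mul21 \<or> has_product D mul22 \<or> has_product D mul23)"
proof (cases "mu C 1 2 2 = 1")
  case True
  then show ?thesis using exists_iso_standard_algebra_xy_y[OF S u x2 True sqrt] by blast
next
  case False
  then have xy: "mu C 1 2 2 = 0" using idempotent_cases[OF idempotent_x_relations(1)[OF S u x2]] by blast
  have D: "sb_iso C (rebase C 1 (-1) 1)" "superbialg3 (rebase C 1 (-1) 1)"
    using sb_iso_rebase[OF S, of "-1" 1 1] by simp_all
  have V: "un (rebase C 1 (-1) 1) 0 = 1" "un (rebase C 1 (-1) 1) 1 = 0"
    "mu (rebase C 1 (-1) 1) 1 1 0 = 0" "mu (rebase C 1 (-1) 1) 1 1 1 = 1"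
    "mu (rebase C 1 (-1) 1) 1 2 2 = 1"
    using rebase_entries[OF S u, of "-1" 1 1] x2 xy by simp_all
  obtain E where "sb_iso (rebase C 1 (-1) 1) E" "superbialg3 E" "un E 0 = 1" "un E 1 = 0"
    "has_product E mul21 \<or> has_product E mul22 \<or> has_product E mul23"
    using exists_iso_standard_algebra_xy_y[OF D(2) V(1,2) V(3,4) V(5) sqrt] by blast
  then show ?thesis using sb_iso_trans[OF D(1)] by blast
qed


section \<open>The coproducts over \<open>A_{2|1}\<close>, \<open>A_{2|2}\<close> and \<open>A_{2|3}\<close>\<close>

lemma product_zero_cases: "(x + a) * (x + b) = 0 \<Longrightarrow> x = -a \<or> x = -(b::'a::field)"
  by (simp add: eq_neg_iff_add_eq_0)

lemma coop_mk:
  "coop (mk M dx dy ex) = mk M (\<lambda>p q. ksign q p * dx q p) (\<lambda>p q. ksign q p * dy q p) (ex::'a::field)"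
  by (auto simp: coop_def mk_def fun_eq_iff tb_def ksign_def)

lemma sb_iso_mk:
  assumes S: "superbialg3 (D::'a::field sbd)" and u: "un D 0 = 1" "un D 1 = 0" and H: "has_product D M"
    and "cu D 1 = ex" and "\<forall>p<3. \<forall>q<3. co D 1 p q = dx p q" and "\<forall>p<3. \<forall>q<3. co D 2 p q = dy p q"
  shows "sb_iso D (mk M dx dy ex)"
proof (rule sb_iso_if_same_constants)
  note F = unit_e0_entries[OF S u] parity_zero_entries[OF S]
  show "\<forall>i<3. \<forall>j<3. \<forall>k<3. mu D i j k = mu (mk M dx dy ex) i j k"
    using H by (simp add: has_product_def mk_def)
  show "\<forall>k<3. un D k = un (mk M dx dy ex) k"
    unfolding all_less_3 using u F by (simp add: mk_def bv_def)
  show "\<forall>k<3. \<forall>i<3. \<forall>j<3. co D k i j = co (mk M dx dy ex) k i j"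
    unfolding all_less_3 using assms(6,7) F by (simp add: mk_def tb_def all_less_3)
  show "\<forall>k<3. cu D k = cu (mk M dx dy ex) k"
    unfolding all_less_3 using assms(5) F by (simp add: mk_def)
qed

lemma coproduct_A21:
  assumes S: "superbialg3 (D::'a::field_char_0 sbd)" and u: "un D 0 = 1" "un D 1 = 0"
    and H: "has_product D mul21"
  shows "cu D 1 = 0" "co D 1 1 1 = -1" "co D 1 2 2 = 0"
    "(co D 2 1 2 = 0 \<and> co D 2 2 1 = -1) \<or> (co D 2 1 2 = -1 \<and> co D 2 2 1 = 0)"
proof -
  note V0 = unit_e0_entries[OF S u] parity_zero_entries[OF S] has_productD[OF H] mul21_def bv_def
  show e: "cu D 1 = 0" using cu_mult[OF S, of 2 2] by (simp add: sum_3 V0)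
  note c = counit_relations_x_zero[OF S u e]
  define c11 where "c11 = co D 1 1 1"
  define c22 where "c22 = co D 1 2 2"
  define d12 where "d12 = co D 2 1 2"
  define d21 where "d21 = co D 2 2 1"
  note V = V0 e c c11_def[symmetric] c22_def[symmetric] d12_def[symmetric] d21_def[symmetric]
  have c22: "c22 = 0"
    by (rule co_mult_coeff[OF S, of 2 2 2 2]) (simp_all add: sum_3 ksign_def V)
  have "c11 = 2 + 4 * c11 + c11 * c11 - c22 * c22"
    by (rule co_mult_coeff[OF S, of 1 1 1 1]) (simp_all add: sum_3 ksign_def V)
  then have "(c11 + 1) * (c11 + 2) = 0" using c22 by (simp add: algebra_simps)
  then have c11_cases: "c11 = -1 \<or> c11 = -2" by (rule product_zero_cases)
  have "d12 = 1 + c11 + c11 * d12 - c22 - c22 * d21 + 2 * d12"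
    by (rule co_mult_coeff[OF S, of 1 2 1 2]) (simp_all add: sum_3 ksign_def V)
  then have d12_c11: "(1 + c11) * (1 + d12) = 0" using c22 by (simp add: algebra_simps)
  have c11_d12: "c11 * d12 = d12 * d12"
    by (rule co_assoc_coeff[OF S, of 2 1 1 2]) (simp_all add: sum_3 V)
  have d21_c11: "d21 * d21 = c11 * d21"
    by (rule co_assoc_coeff[OF S, of 2 2 1 1]) (simp_all add: sum_3 V)
  have c11_d: "c11 = 2 * d12 + d12 * d12 + 2 * d21 + d21 * d21"
    by (rule co_mult_coeff[OF S, of 2 2 1 1]) (simp_all add: sum_3 ksign_def V)
  have c11: "c11 = -1"
  proof (rule ccontr)
    assume "c11 \<noteq> -1"
    then have "c11 = -2" "d12 = -1" using c11_cases d12_c11 by (auto simp: add_eq_0_iff)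
    then show False using c11_d12 by simp
  qed
  have "d12 * (d12 + 1) = 0" "d21 * (d21 + 1) = 0" using c11_d12 d21_c11 c11 by algebra+
  then have "d12 = 0 \<or> d12 = -1" "d21 = 0 \<or> d21 = -1" by (simp_all add: eq_neg_iff_add_eq_0)
  then have "(d12 = 0 \<and> d21 = -1) \<or> (d12 = -1 \<and> d21 = 0)"
    using c11_d c11 by (elim disjE) simp_all
  then show "co D 1 1 1 = -1" "co D 1 2 2 = 0"
    "(co D 2 1 2 = 0 \<and> co D 2 2 1 = -1) \<or> (co D 2 1 2 = -1 \<and> co D 2 2 1 = 0)"
    using c11 c22 unfolding c11_def c22_def d12_def d21_def by simp_all
qed

lemma classify_A21:
  assumes S: "superbialg3 (D::'a::field_char_0 sbd)" and u: "un D 0 = 1" "un D 1 = 0"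
    and H: "has_product D mul21"
  shows "\<exists>n\<in>{1..11}. sb_iso D (model n)"
proof -
  note C = coproduct_A21[OF S u H]
  note V = unit_e0_entries[OF S u] parity_zero_entries[OF S] has_productD[OF H] mul21_def bv_def
    C(1-3) counit_relations_x_zero[OF S u C(1)]
  from C(4) show ?thesis
  proof
    assume d: "co D 2 1 2 = 0 \<and> co D 2 2 1 = -1"
    have "sb_iso D (model 1)" unfolding model_def
      by (simp, rule sb_iso_mk[OF S u H]) (simp_all add: all_less_3 V d dx0_def tb_def)
    then show ?thesis by force
  next
    assume d: "co D 2 1 2 = -1 \<and> co D 2 2 1 = 0"
    have "sb_iso D (model 2)" unfolding model_def
      by (simp add: coop_mk, rule sb_iso_mk[OF S u H])
        (simp_all add: all_less_3 V d dx0_def tb_def ksign_def)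
    then show ?thesis by force
  qed
qed

lemma counit_x_cases:
  assumes S: "superbialg3 (D::'a::field sbd)" and u: "un D 0 = 1" "un D 1 = 0"
    and x2: "mu D 1 1 0 = 0" "mu D 1 1 1 = 1"
  shows "cu D 1 = 0 \<or> cu D 1 = 1"
  using cu_mult[OF S, of 1 1] idempotent_cases[of "cu D 1"]
  by (simp add: sum_3 unit_e0_entries[OF S u] parity_zero_entries[OF S] x2)

lemma rescale_y:
  assumes S: "superbialg3 (D::'a::field sbd)" and u: "un D 0 = 1" "un D 1 = 0" and r: "r \<noteq> 0"
    and H: "has_product D M" and M: "M 2 2 0 = 0" "M 2 2 1 = 0" "M 1 1 0 = 0" "M 1 1 1 = 1"
  shows "sb_iso D (rebase D 0 1 r)" "superbialg3 (rebase D 0 1 r)"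
    "un (rebase D 0 1 r) 0 = 1" "un (rebase D 0 1 r) 1 = 0"
    "has_product (rebase D 0 1 r) M" "cu (rebase D 0 1 r) 1 = cu D 1"
    "co (rebase D 0 1 r) 1 2 2 = co D 1 2 2 / (r * r)"
    "co (rebase D 0 1 r) 1 0 0 = co D 1 0 0" "co (rebase D 0 1 r) 1 0 1 = co D 1 0 1"
    "co (rebase D 0 1 r) 1 1 0 = co D 1 1 0" "co (rebase D 0 1 r) 1 1 1 = co D 1 1 1"
    "co (rebase D 0 1 r) 2 0 2 = co D 2 0 2" "co (rebase D 0 1 r) 2 2 0 = co D 2 2 0"
    "co (rebase D 0 1 r) 2 1 2 = co D 2 1 2" "co (rebase D 0 1 r) 2 2 1 = co D 2 2 1"
proof -
  note E = sb_iso_rebase[OF S _ r, of 1 0] rebase_entries[OF S u _ r, of 1 0]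
  show "sb_iso D (rebase D 0 1 r)" and SE: "superbialg3 (rebase D 0 1 r)"
    and uE: "un (rebase D 0 1 r) 0 = 1" "un (rebase D 0 1 r) 1 = 0"
    and "cu (rebase D 0 1 r) 1 = cu D 1"
    using E by simp_all
  have "mu D 2 2 0 = 0" "mu D 2 2 1 = 0" "mu D 1 1 0 = 0" "mu D 1 1 1 = 1"
    using has_productD[OF H, of 2 2 0] has_productD[OF H, of 2 2 1] has_productD[OF H, of 1 1 0]
      has_productD[OF H, of 1 1 1] M by simp_all
  then show "has_product (rebase D 0 1 r) M"
    unfolding has_product_def all_less_3
    using E unit_e0_entries[OF SE uE] parity_zero_entries[OF SE] unit_e0_entries[OF S u]
      parity_zero_entries[OF S] has_productD[OF H] by simp
  show "co (rebase D 0 1 r) 1 2 2 = co D 1 2 2 / (r * r)"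
    "co (rebase D 0 1 r) 1 0 0 = co D 1 0 0" "co (rebase D 0 1 r) 1 0 1 = co D 1 0 1"
    "co (rebase D 0 1 r) 1 1 0 = co D 1 1 0" "co (rebase D 0 1 r) 1 1 1 = co D 1 1 1"
    "co (rebase D 0 1 r) 2 0 2 = co D 2 0 2" "co (rebase D 0 1 r) 2 2 0 = co D 2 2 0"
    "co (rebase D 0 1 r) 2 1 2 = co D 2 1 2" "co (rebase D 0 1 r) 2 2 1 = co D 2 2 1"
    using r parity_zero_entries[OF S] by (simp_all add: rebase_def transport_def sum_3 field_simps)
qed

lemma classify_A22_counit_zero:
  assumes S: "superbialg3 (D::'a::field_char_0 sbd)" and u: "un D 0 = 1" "un D 1 = 0"
    and H: "has_product D mul22" and e: "cu D 1 = 0" and y: "co D 1 2 2 = 0 \<or> co D 1 2 2 = 1"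
  shows "\<exists>n\<in>{1..11}. sb_iso D (model n)"
proof -
  define c11 where "c11 = co D 1 1 1"
  define d12 where "d12 = co D 2 1 2"
  define d21 where "d21 = co D 2 2 1"
  note c = counit_relations_x_zero[OF S u e]
  note V = unit_e0_entries[OF S u] parity_zero_entries[OF S] has_productD[OF H] mul22_def bv_def
    e c c11_def[symmetric] d12_def[symmetric] d21_def[symmetric]
  have "0 = 1 + d12"
    by (rule co_mult_coeff[OF S, of 2 1 1 2]) (simp_all add: sum_3 ksign_def V)
  moreover have "0 = 1 + d21"
    by (rule co_mult_coeff[OF S, of 2 1 2 1]) (simp_all add: sum_3 ksign_def V)
  ultimately have d: "d12 = -1" "d21 = -1" by (simp_all add: eq_neg_iff_add_eq_0 add.commute)
  have "c11 * d12 = d12 * d12"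
    by (rule co_assoc_coeff[OF S, of 2 1 1 2]) (simp_all add: sum_3 V)
  then have c11: "c11 = -1" using d by algebra
  from y show ?thesis
  proof
    assume y: "co D 1 2 2 = 0"
    have "sb_iso D (model 3)" unfolding model_def
      by (simp, rule sb_iso_mk[OF S u H]) (simp_all add: all_less_3 V y d c11 dx0_def tb_def)
    then show ?thesis by force
  next
    assume y: "co D 1 2 2 = 1"
    have "sb_iso D (model 4)" unfolding model_def
      by (simp, rule sb_iso_mk[OF S u H]) (simp_all add: all_less_3 V y d c11 dx0_def tb_def)
    then show ?thesis by force
  qed
qed

lemma classify_A22_counit_one:
  assumes S: "superbialg3 (D::'a::field_char_0 sbd)" and u: "un D 0 = 1" "un D 1 = 0"
    and H: "has_product D mul22" and e: "cu D 1 = 1" and y: "co D 1 2 2 = 0 \<or> co D 1 2 2 = 1"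
  shows "\<exists>n\<in>{1..11}. sb_iso D (model n)"
proof -
  define c00 where "c00 = co D 1 0 0"
  define c01 where "c01 = co D 1 0 1"
  define c10 where "c10 = co D 1 1 0"
  define c11 where "c11 = co D 1 1 1"
  define d02 where "d02 = co D 2 0 2"
  define d20 where "d20 = co D 2 2 0"
  define d12 where "d12 = co D 2 1 2"
  define d21 where "d21 = co D 2 2 1"
  note N = c00_def[symmetric] c01_def[symmetric] c10_def[symmetric] c11_def[symmetric]
    d02_def[symmetric] d20_def[symmetric] d12_def[symmetric] d21_def[symmetric]
  note cr = counit_relations[OF S u, unfolded N e]
  note V = unit_e0_entries[OF S u] parity_zero_entries[OF S] has_productD[OF H] mul22_def bv_def e N
  have c00_idem: "c00 = c00 * c00"
    by (rule co_mult_coeff[OF S, of 1 1 0 0]) (simp_all add: sum_3 ksign_def V)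
  have c00_d02: "0 = c00 * d02"
    by (rule co_mult_coeff[OF S, of 2 1 0 2]) (simp_all add: sum_3 ksign_def V)
  have c00_d20: "0 = c00 * d20"
    by (rule co_mult_coeff[OF S, of 2 1 2 0]) (simp_all add: sum_3 ksign_def V)
  have d20_sq: "d20 * d20 = c00 * d21 + d20"
    by (rule co_assoc_coeff[OF S, of 2 2 0 0]) (simp_all add: sum_3 V)
  have d12_eq: "d12 = c00 * d12 + c01 * d12 + c10 * d02 + c10 * d12 + c11 * d02 + c11 * d12"
    by (rule co_mult_coeff[OF S, of 1 2 1 2]) (simp_all add: sum_3 ksign_def V)
  have d21_eq: "d21 = c00 * d21 + c01 * d20 + c01 * d21 + c10 * d21 + c11 * d20 + c11 * d21"
    by (rule co_mult_coeff[OF S, of 1 2 2 1]) (simp_all add: sum_3 ksign_def V)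
  have c0: "c00 = 0"
  proof (rule ccontr)
    assume "c00 \<noteq> 0"
    then have "c00 = 1" using idempotent_cases[of c00] c00_idem by simp
    then show False using c00_d02 c00_d20 d20_sq cr by simp
  qed
  have c: "c10 = 0" "c01 = 0" "c11 = 1" using cr c0 by simp_all
  have d: "d02 = 0" "d20 = 0" using d12_eq d21_eq c c0 by simp_all
  have d': "d12 = 1" "d21 = 1" using cr d by simp_all
  from y show ?thesis
  proof
    assume y: "co D 1 2 2 = 0"
    have "sb_iso D (model 5)" unfolding model_def
      by (simp, rule sb_iso_mk[OF S u H]) (simp_all add: all_less_3 V y c0 c d d' tb_def)
    then show ?thesis by force
  next
    assume y: "co D 1 2 2 = 1"
    have "sb_iso D (model 6)" unfolding model_def
      by (simp, rule sb_iso_mk[OF S u H]) (simp_all add: all_less_3 V y c0 c d d' tb_def)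
    then show ?thesis by force
  qed
qed

text \<open>Over \<open>A_{2|2}\<close> the coefficient of \<open>y \<otimes> y\<close> in \<open>\<Delta>(x)\<close> is only determined up to
  the square of a rescaling of \<open>y\<close>.\<close>

lemma classify_A22:
  assumes S: "superbialg3 (D::'a::field_char_0 sbd)" and u: "un D 0 = 1" "un D 1 = 0"
    and H: "has_product D mul22" and sqrt: "\<And>c::'a. \<exists>z. z * z = c"
  shows "\<exists>n\<in>{1..11}. sb_iso D (model n)"
proof -
  obtain E where E: "sb_iso D E" "superbialg3 E" "un E 0 = 1" "un E 1 = 0" "has_product E mul22"
    "co E 1 2 2 = 0 \<or> co E 1 2 2 = 1"
  proof (cases "co D 1 2 2 = 0")
    case True
    then show ?thesis using that sb_iso_refl S u H by blast
  next
    case False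
    obtain r where r: "r * r = co D 1 2 2" using sqrt by blast
    then have r0: "r \<noteq> 0" using False by auto
    show ?thesis
      by (rule that[of "rebase D 0 1 r"])
        (use rescale_y[OF S u r0 H] r r0 False in \<open>simp_all add: mul22_def bv_def\<close>)
  qed
  have x2: "mu E 1 1 0 = 0" "mu E 1 1 1 = 1"
    using has_productD[OF E(5)] by (simp_all add: mul22_def bv_def)
  then have "\<exists>n\<in>{1..11}. sb_iso E (model n)"
    using counit_x_cases[OF E(2-4) x2] classify_A22_counit_zero[OF E(2-5) _ E(6)]
      classify_A22_counit_one[OF E(2-5) _ E(6)] by blast
  then show ?thesis using sb_iso_trans[OF E(1)] by blast
qed

lemma coproduct_A23_counit_zero:
  assumes S: "superbialg3 (D::'a::field_char_0 sbd)" and u: "un D 0 = 1" "un D 1 = 0"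
    and H: "has_product D mul23" and e: "cu D 1 = 0"
  shows "co D 1 1 1 = -1" "co D 1 2 2 = 0" "co D 2 1 2 = 0 \<or> co D 2 1 2 = -1"
    "co D 2 2 1 = 0 \<or> co D 2 2 1 = -1"
proof -
  define c11 where "c11 = co D 1 1 1"
  define c22 where "c22 = co D 1 2 2"
  define d12 where "d12 = co D 2 1 2"
  define d21 where "d21 = co D 2 2 1"
  note c = counit_relations_x_zero[OF S u e]
  note V = unit_e0_entries[OF S u] parity_zero_entries[OF S] has_productD[OF H] mul23_def bv_def
    e c c11_def[symmetric] c22_def[symmetric] d12_def[symmetric] d21_def[symmetric]
  have "c11 = 2 + 4 * c11 + c11 * c11"
    by (rule co_mult_coeff[OF S, of 1 1 1 1]) (simp_all add: sum_3 ksign_def V)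
  then have "(c11 + 1) * (c11 + 2) = 0" by algebra
  then have c11_cases: "c11 = -1 \<or> c11 = -2" by (rule product_zero_cases)
  have c22_eq: "c22 = 2 * c11 * c22 + 4 * c22"
    by (rule co_mult_coeff[OF S, of 1 1 2 2]) (simp_all add: sum_3 ksign_def V)
  have "d12 = 1 + c11 + c11 * d12 + 2 * d12"
    by (rule co_mult_coeff[OF S, of 1 2 1 2]) (simp_all add: sum_3 ksign_def V)
  then have d12_c11: "(1 + c11) * (1 + d12) = 0" by algebra
  have c11_d12: "c11 * d12 = d12 * d12"
    by (rule co_assoc_coeff[OF S, of 2 1 1 2]) (simp_all add: sum_3 V)
  have d21_c11: "d21 * d21 = c11 * d21"
    by (rule co_assoc_coeff[OF S, of 2 2 1 1]) (simp_all add: sum_3 V)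
  have c11: "c11 = -1"
  proof (rule ccontr)
    assume "c11 \<noteq> -1"
    then have "c11 = -2" "d12 = -1" using c11_cases d12_c11 by (auto simp: add_eq_0_iff)
    then show False using c11_d12 by simp
  qed
  have c22: "c22 = 0" using c22_eq c11 by algebra
  have "d12 * (d12 + 1) = 0" "d21 * (d21 + 1) = 0" using c11_d12 d21_c11 c11 by algebra+
  then show "co D 1 1 1 = -1" "co D 1 2 2 = 0" "co D 2 1 2 = 0 \<or> co D 2 1 2 = -1"
    "co D 2 2 1 = 0 \<or> co D 2 2 1 = -1"
    using c11 c22 unfolding c11_def c22_def d12_def d21_def by (simp_all add: eq_neg_iff_add_eq_0)
qed

lemma classify_A23_counit_zero:
  assumes S: "superbialg3 (D::'a::field_char_0 sbd)" and u: "un D 0 = 1" "un D 1 = 0"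
    and H: "has_product D mul23" and e: "cu D 1 = 0"
  shows "\<exists>n\<in>{1..11}. sb_iso D (model n)"
proof -
  note C = coproduct_A23_counit_zero[OF S u H e]
  note V = unit_e0_entries[OF S u] parity_zero_entries[OF S] has_productD[OF H] mul23_def bv_def
    e C(1,2) counit_relations_x_zero[OF S u e]
  consider "co D 2 1 2 = -1" "co D 2 2 1 = -1" | "co D 2 1 2 = -1" "co D 2 2 1 = 0"
    | "co D 2 1 2 = 0" "co D 2 2 1 = -1" | "co D 2 1 2 = 0" "co D 2 2 1 = 0"
    using C(3,4) by blast
  then show ?thesis
  proof cases
    case d: 1
    have "sb_iso D (model 7)" unfolding model_def
      by (simp, rule sb_iso_mk[OF S u H]) (simp_all add: all_less_3 V d dx0_def tb_def)
    then show ?thesis by force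
  next
    case d: 2
    have "sb_iso D (model 8)" unfolding model_def
      by (simp, rule sb_iso_mk[OF S u H]) (simp_all add: all_less_3 V d dx0_def tb_def)
    then show ?thesis by force
  next
    case d: 3
    have "sb_iso D (model 9)" unfolding model_def
      by (simp add: coop_mk, rule sb_iso_mk[OF S u H])
        (simp_all add: all_less_3 V d dx0_def tb_def ksign_def)
    then show ?thesis by force
  next
    case d: 4
    have "sb_iso D (model 10)" unfolding model_def
      by (simp, rule sb_iso_mk[OF S u H]) (simp_all add: all_less_3 V d dx0_def tb_def)
    then show ?thesis by force
  qed
qed

lemma classify_A23_counit_one:
  assumes S: "superbialg3 (D::'a::field_char_0 sbd)" and u: "un D 0 = 1" "un D 1 = 0"
    and H: "has_product D mul23" and e: "cu D 1 = 1"
  shows "sb_iso D (model 11)"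
proof -
  define c00 where "c00 = co D 1 0 0"
  define c01 where "c01 = co D 1 0 1"
  define c10 where "c10 = co D 1 1 0"
  define c11 where "c11 = co D 1 1 1"
  define c22 where "c22 = co D 1 2 2"
  define d02 where "d02 = co D 2 0 2"
  define d20 where "d20 = co D 2 2 0"
  define d12 where "d12 = co D 2 1 2"
  define d21 where "d21 = co D 2 2 1"
  note N = c00_def[symmetric] c01_def[symmetric] c10_def[symmetric] c11_def[symmetric] c22_def[symmetric]
    d02_def[symmetric] d20_def[symmetric] d12_def[symmetric] d21_def[symmetric]
  note cr = counit_relations[OF S u, unfolded N e]
  note V = unit_e0_entries[OF S u] parity_zero_entries[OF S] has_productD[OF H] mul23_def bv_def e N
  have c00_idem: "c00 = c00 * c00"
    by (rule co_mult_coeff[OF S, of 1 1 0 0]) (simp_all add: sum_3 ksign_def V)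
  have d20_eq: "d20 = c00 * d20 + c10 * d20"
    by (rule co_mult_coeff[OF S, of 1 2 2 0]) (simp_all add: sum_3 ksign_def V)
  have d20_sq: "d20 * d20 = c00 * d21 + d20"
    by (rule co_assoc_coeff[OF S, of 2 2 0 0]) (simp_all add: sum_3 V)
  have c22_eq: "c22 = 2 * c00 * c22 + 2 * c01 * c22 + 2 * c10 * c22 + 2 * c11 * c22"
    by (rule co_mult_coeff[OF S, of 1 1 2 2]) (simp_all add: sum_3 ksign_def V)
  have d12_eq: "d12 = c00 * d12 + c01 * d12 + c10 * d02 + c10 * d12 + c11 * d02 + c11 * d12"
    by (rule co_mult_coeff[OF S, of 1 2 1 2]) (simp_all add: sum_3 ksign_def V)
  have d21_eq: "d21 = c00 * d21 + c01 * d20 + c01 * d21 + c10 * d21 + c11 * d20 + c11 * d21"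
    by (rule co_mult_coeff[OF S, of 1 2 2 1]) (simp_all add: sum_3 ksign_def V)
  have c0: "c00 = 0"
  proof (rule ccontr)
    assume "c00 \<noteq> 0"
    then have "c00 = 1" using idempotent_cases[of c00] c00_idem by simp
    moreover then have "c10 = -1" using cr by (simp add: eq_neg_iff_add_eq_0 add.commute)
    ultimately show False using d20_eq d20_sq cr by simp
  qed
  have c: "c10 = 0" "c01 = 0" "c11 = 1" using cr c0 by simp_all
  have c22: "c22 = 0" using c22_eq c c0 by simp
  have d: "d02 = 0" "d20 = 0" using d12_eq d21_eq c c0 by simp_all
  have d': "d12 = 1" "d21 = 1" using cr d by simp_all
  show "sb_iso D (model 11)" unfolding model_def
    by (simp, rule sb_iso_mk[OF S u H]) (simp_all add: all_less_3 V c0 c c22 d d' tb_def)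
qed

lemma classify_A23:
  assumes S: "superbialg3 (D::'a::field_char_0 sbd)" and u: "un D 0 = 1" "un D 1 = 0"
    and H: "has_product D mul23"
  shows "\<exists>n\<in>{1..11}. sb_iso D (model n)"
proof -
  have x2: "mu D 1 1 0 = 0" "mu D 1 1 1 = 1"
    using has_productD[OF H] by (simp_all add: mul23_def bv_def)
  then show ?thesis
    using counit_x_cases[OF S u x2] classify_A23_counit_zero[OF S u H]
      classify_A23_counit_one[OF S u H] by force
qed

lemma exists_iso_model:
  assumes S: "superbialg3 (A::'a::field_char_0 sbd)" and sqrt: "\<And>c::'a. \<exists>z. z * z = c"
  shows "\<exists>n\<in>{1..11}. sb_iso A (model n)"
proof -
  obtain B where B: "sb_iso A B" "superbialg3 B" "un B 0 = 1" "un B 1 = 0"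
    using exists_iso_unit_e0[OF S] by blast
  obtain C where C: "sb_iso B C" "superbialg3 C" "un C 0 = 1" "un C 1 = 0" "mu C 1 1 0 = 0"
    "mu C 1 1 1 = 1 \<or> mu C 1 1 1 = 0"
    using exists_iso_x_square_normal[OF B(2-4) sqrt] by blast
  have x2: "mu C 1 1 1 = 1" using x_square_not_zero[OF C(2-5)] C(6) by blast
  obtain D where D: "sb_iso C D" "superbialg3 D" "un D 0 = 1" "un D 1 = 0"
    "has_product D mul21 \<or> has_product D mul22 \<or> has_product D mul23"
    using exists_iso_standard_algebra[OF C(2-5) x2 sqrt] by blast
  then obtain n where "n \<in> {1..11}" "sb_iso D (model n)"
    using classify_A21[OF D(2-4)] classify_A22[OF D(2-4) _ sqrt] classify_A23[OF D(2-4)] by blast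
  then show ?thesis using sb_iso_trans[OF sb_iso_trans[OF B(1) C(1)] D(1)] sb_iso_trans by blast
qed

section \<open>The eleven models\<close>

lemmas model_simps = model_def mk_def coop_def mul21_def mul22_def mul23_def bv_def tb_def dx0_def

lemma superbialg3_model_1: "superbialg3 (model 1 :: 'a::field sbd)"
  unfolding superbialg3_def all_less_3 by (simp add: model_simps sum_3 kd_def ksign_def par_def)

lemma superbialg3_model_2: "superbialg3 (model 2 :: 'a::field sbd)"
  unfolding superbialg3_def all_less_3 by (simp add: model_simps sum_3 kd_def ksign_def par_def)

lemma superbialg3_model_3: "superbialg3 (model 3 :: 'a::field sbd)"
  unfolding superbialg3_def all_less_3 by (simp add: model_simps sum_3 kd_def ksign_def par_def)

lemma superbialg3_model_4: "superbialg3 (model 4 :: 'a::field sbd)"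
  unfolding superbialg3_def all_less_3 by (simp add: model_simps sum_3 kd_def ksign_def par_def)

lemma superbialg3_model_5: "superbialg3 (model 5 :: 'a::field sbd)"
  unfolding superbialg3_def all_less_3 by (simp add: model_simps sum_3 kd_def ksign_def par_def)

lemma superbialg3_model_6: "superbialg3 (model 6 :: 'a::field sbd)"
  unfolding superbialg3_def all_less_3 by (simp add: model_simps sum_3 kd_def ksign_def par_def)

lemma superbialg3_model_7: "superbialg3 (model 7 :: 'a::field sbd)"
  unfolding superbialg3_def all_less_3 by (simp add: model_simps sum_3 kd_def ksign_def par_def)

lemma superbialg3_model_8: "superbialg3 (model 8 :: 'a::field sbd)"
  unfolding superbialg3_def all_less_3 by (simp add: model_simps sum_3 kd_def ksign_def par_def)

lemma superbialg3_model_9: "superbialg3 (model 9 :: 'a::field sbd)"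
  unfolding superbialg3_def all_less_3 by (simp add: model_simps sum_3 kd_def ksign_def par_def)

lemma superbialg3_model_10: "superbialg3 (model 10 :: 'a::field sbd)"
  unfolding superbialg3_def all_less_3 by (simp add: model_simps sum_3 kd_def ksign_def par_def)

lemma superbialg3_model_11: "superbialg3 (model 11 :: 'a::field sbd)"
  unfolding superbialg3_def all_less_3 by (simp add: model_simps sum_3 kd_def ksign_def par_def)

lemma model_index_cases:
  "n \<in> {1..11::nat} \<Longrightarrow> n = 1 \<or> n = 2 \<or> n = 3 \<or> n = 4 \<or> n = 5 \<or> n = 6 \<or> n = 7 \<or> n = 8 \<or> n = 9 \<or>
    n = 10 \<or> n = 11"
  unfolding atLeastAtMost_iff by presburger

lemma superbialg3_model: "n \<in> {1..11} \<Longrightarrow> superbialg3 (model n :: 'a::field sbd)"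
  using model_index_cases[of n] superbialg3_model_1 superbialg3_model_2 superbialg3_model_3
    superbialg3_model_4 superbialg3_model_5 superbialg3_model_6 superbialg3_model_7
    superbialg3_model_8 superbialg3_model_9 superbialg3_model_10 superbialg3_model_11
  by auto

lemma model_normal_form:
  assumes "n \<in> {1..11}"
  shows "un (model n :: 'a::field sbd) 0 = 1" "un (model n :: 'a sbd) 1 = 0"
    "mu (model n :: 'a sbd) 1 1 0 = 0" "mu (model n :: 'a sbd) 1 1 1 = 1" "mu (model n :: 'a sbd) 1 2 2 = 1"
  using model_index_cases[OF assms] by (auto simp: model_def mk_def coop_def mul21_def mul22_def mul23_def bv_def)

text \<open>An isomorphism between superbialgebras in the normal form \<open>1 = e\<^sub>0\<close>, \<open>x\<^sup>2 = x\<close>,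
  \<open>x y = y\<close> fixes \<open>1\<close> and \<open>x\<close> and rescales \<open>y\<close>, so it preserves which of these entries vanish.\<close>

definition zero_pattern :: "'a::field sbd \<Rightarrow> bool list" where
  "zero_pattern B =
    [mu B 2 1 2 = 0, mu B 2 2 1 = 0, cu B 1 = 0, co B 2 1 2 = 0, co B 2 2 1 = 0, co B 1 2 2 = 0]"

lemma zero_pattern_iso_invariant:
  assumes iso: "sb_iso B (C::'a::field sbd)" and SB: "superbialg3 B" and SC: "superbialg3 C"
    and uB: "un B 0 = 1" "un B 1 = 0" and uC: "un C 0 = 1" "un C 1 = 0"
    and xB: "mu B 1 1 0 = 0" "mu B 1 1 1 = 1" "mu B 1 2 2 = 1"
    and xC: "mu C 1 1 0 = 0" "mu C 1 1 1 = 1" "mu C 1 2 2 = 1"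
  shows "zero_pattern B = zero_pattern C"
proof -
  obtain P Q where "parity_preserving P" "inverse_mat3 P Q" "sb_hom B C P"
    using iso unfolding sb_iso_iff by blast
  then interpret sb_iso_witness B C P Q by unfold_locales
  note FB = unit_e0_entries[OF SB uB] parity_zero_entries[OF SB] xB
  note FC = unit_e0_entries[OF SC uC] parity_zero_entries[OF SC] xC
  have p0: "P 0 0 = 1" "P 0 1 = 0"
    using un_hom[of 0] un_hom[of 1] FB uB uC P_mixed_parity by (simp_all add: sum_3)
  have p2: "P 2 2 \<noteq> 0" using P_odd_invertible by auto
  have idem: "P 1 0 * P 1 0 = P 1 0"
    using mu_hom[of 1 1 0] FB FC P_mixed_parity by (simp add: sum_3)
  have "P 2 2 * (P 1 0 + P 1 1) = P 2 2"
    using mu_hom[of 1 2 2] FB FC P_mixed_parity by (simp add: sum_3 algebra_simps)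
  then have p1: "P 1 0 + P 1 1 = 1" using p2 by simp
  have p10: "P 1 0 = 0"
  proof (rule ccontr)
    assume "P 1 0 \<noteq> 0"
    then have "P 1 0 = 1" "P 1 1 = 0" using idem p1 idempotent_cases by auto
    then have "Q 0 0 = 0" using P_Q[of 1 0] P_mixed_parity by (simp add: sum_3 kd_def)
    moreover have "Q 0 0 = 1" using P_Q[of 0 0] p0 P_mixed_parity by (simp add: sum_3 kd_def)
    ultimately show False by simp
  qed
  have p11: "P 1 1 = 1" using p1 p10 by simp
  note PP = p0 p10 p11 P_mixed_parity
  have "mu B 2 1 2 = mu C 2 1 2" "P 2 2 * P 2 2 * mu C 2 2 1 = mu B 2 2 1" "cu B 1 = cu C 1"
    "co B 2 1 2 = co C 2 1 2" "co B 2 2 1 = co C 2 2 1" "co C 1 2 2 = P 2 2 * (P 2 2 * co B 1 2 2)"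
    using mu_hom[of 2 1 2] mu_hom[of 2 2 1] cu_hom[of 1] co_hom[of 2 1 2] co_hom[of 2 2 1] co_hom[of 1 2 2]
      FB FC PP p2 by (simp_all add: sum_3)
  then show ?thesis unfolding zero_pattern_def using p2 by auto
qed

definition model_zero_patterns :: "bool list list" where
  "model_zero_patterns =
    [[False, False, True, True, False, True], [False, False, True, False, True, True],
     [True, True, True, False, False, True], [True, True, True, False, False, False],
     [True, True, False, False, False, True], [True, True, False, False, False, False],
     [False, True, True, False, False, True], [False, True, True, False, True, True],
     [False, True, True, True, False, True], [False, True, True, True, True, True],
     [False, True, False, False, False, True]]"

lemma zero_pattern_model:
  assumes "n \<in> {1..11}"
  shows "zero_pattern (model n :: 'a::field_char_0 sbd) = model_zero_patterns ! (n - 1)"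
  using model_index_cases[OF assms]
  by (elim disjE) (simp_all add: zero_pattern_def model_zero_patterns_def model_simps ksign_def)

lemma models_not_iso:
  assumes n: "n \<in> {1..11}" and m: "m \<in> {1..11}" and iso: "sb_iso (model n :: 'a::field_char_0 sbd) (model m)"
  shows "n = m"
proof -
  have "zero_pattern (model n :: 'a sbd) = zero_pattern (model m :: 'a sbd)"
    using zero_pattern_iso_invariant[OF iso superbialg3_model[OF n] superbialg3_model[OF m]]
      model_normal_form[OF n] model_normal_form[OF m] by blast
  then have "model_zero_patterns ! (n - 1) = model_zero_patterns ! (m - 1)"
    by (simp add: zero_pattern_model[OF n] zero_pattern_model[OF m])
  moreover have "distinct model_zero_patterns" "length model_zero_patterns = 11"
    by (simp_all add: model_zero_patterns_def)
  ultimately have "n - 1 = m - 1" using n m nth_eq_iff_index_eq by fastforce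
  then show ?thesis using n m unfolding atLeastAtMost_iff by linarith
qed

theorem theorem3p5:
  fixes dummy :: "'a::field_char_0 itself"
  assumes alg_closed: "\<forall>p :: 'a poly. degree p > 0 \<longrightarrow> (\<exists>z. poly p z = 0)"
  shows "(\<forall>n\<in>{1..11::nat}. superbialg3 (model n :: 'a sbd)) \<and>
         (\<forall>n\<in>{1..11::nat}. \<forall>m\<in>{1..11::nat}.
             sb_iso (model n :: 'a sbd) (model m) \<longrightarrow> n = m) \<and>
         (\<forall>A :: 'a sbd. superbialg3 A \<longrightarrow> (\<exists>!n. n \<in> {1..11} \<and> sb_iso A (model n)))"
proof (intro conjI ballI allI impI)
  fix n :: nat assume "n \<in> {1..11}"
  then show "superbialg3 (model n :: 'a sbd)" by (rule superbialg3_model)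
next
  fix n m :: nat assume "n \<in> {1..11}" "m \<in> {1..11}" "sb_iso (model n :: 'a sbd) (model m)"
  then show "n = m" by (rule models_not_iso)
next
  fix A :: "'a sbd" assume "superbialg3 A"
  then obtain n where n: "n \<in> {1..11}" "sb_iso A (model n)"
    using exists_iso_model exists_square_root[OF alg_closed] by blast
  show "\<exists>!n. n \<in> {1..11} \<and> sb_iso A (model n)"
  proof (rule ex1I[of _ n])
    show "n \<in> {1..11} \<and> sb_iso A (model n)" using n by blast
  next
    fix m assume "m \<in> {1..11} \<and> sb_iso A (model m)"
    then show "m = n" using models_not_iso n sb_iso_trans sb_iso_sym by metis
  qed
qed

end
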